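(* Let $\mathcal G$ be a Kac–Moody Lie algebra, $A=\mathbb C[t_1^{\pm1},\dots,t_n^{\pm1}]$, and $\psi$ a linear functional on $H=\mathfrak h'\otimes A\oplus\mathfrak h''$. Then $V(\psi)$ has finite-dimensional weight spaces with respect to $\mathfrak h$ if and only if there is a co-finite ideal $I$ of $A$ (i.e. $\dim A/I<\infty$) such that $\psi(\mathfrak h'\otimes I)=0$, i.e. $\psi$ factors through $\mathfrak h'\otimes A/I$.
   Context: $\mathcal G$ is a Kac–Moody Lie algebra with Cartan subalgebra $\mathfrak h$; $\mathcal G'=[\mathcal G,\mathcal G]$, $\mathfrak h'=\mathfrak h\cap\mathcal G'$, $\mathfrak h''$ a complement with $\mathfrak h=\mathfrak h'\oplus\mathfrak h''$, and $\mathcal G'=N^-\oplus\mathfrak h'\oplus N^+$ the decomposition into negative root spaces, $\mathfrak h'$, positive root spaces. $t^{\underline m}=t_1^{m_1}\cdots t_n^{m_n}$. The Lie algebra $\mathcal G'\otimes A\oplus\mathfrak h''$ has bracket $[X\otimes f,Y\otimes g]=[X,Y]\otimes fg$, $[h,X\otimes f]=[h,X]\otimes f$ for $h\in\mathfrak h''$, $[\mathfrak h'',\mathfrak h'']=0$; $H$ is an abelian subalgebra. Let $\mathbb C_\psi$ be the one-dimensional module on which $H$ acts by $\psi$ and $N^+\otimes A$ by $0$; $V(\psi)$ is the unique irreducible quotient of $U(\mathcal G'\otimes A\oplus\mathfrak h'')\otimes_{U(N^+\otimes A\oplus H)}\mathbb C_\psi$. Weight spaces are eigenspaces of $\mathfrak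 h=\mathfrak h'\otimes1\oplus\mathfrak h''$. *)

theory Defs
  imports Complex_Main
begin

text \<open>A complex vector space is a type of class ab_group_add together with a scalar
  multiplication sc satisfying the locale vector_space sc.\<close>

definition csubspace :: "(complex \<Rightarrow> 'a \<Rightarrow> 'a) \<Rightarrow> 'a::ab_group_add set \<Rightarrow> bool" where
  "csubspace sc S \<longleftrightarrow> 0 \<in> S \<and> (\<forall>x\<in>S. \<forall>y\<in>S. x + y \<in> S) \<and> (\<forall>c. \<forall>x\<in>S. sc c x \<in> S)"

definition in_fspan :: "(complex \<Rightarrow> 'a \<Rightarrow> 'a) \<Rightarrow> 'a::ab_group_add set \<Rightarrow> 'a \<Rightarrow> bool" where
  "in_fspan sc B x \<longleftrightarrow> (\<exists>c. x = (\<Sum>b\<in>B. sc (c b) b))"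

definition findep :: "(complex \<Rightarrow> 'a \<Rightarrow> 'a) \<Rightarrow> 'a::ab_group_add set \<Rightarrow> bool" where
  "findep sc B \<longleftrightarrow> (\<forall>c. (\<Sum>b\<in>B. sc (c b) b) = 0 \<longrightarrow> (\<forall>b\<in>B. c b = 0))"

definition fin_dim :: "(complex \<Rightarrow> 'a \<Rightarrow> 'a) \<Rightarrow> 'a::ab_group_add set \<Rightarrow> bool" where
  "fin_dim sc W \<longleftrightarrow> (\<exists>B. finite B \<and> (\<forall>w\<in>W. in_fspan sc B w))"

definition has_dim :: "(complex \<Rightarrow> 'a \<Rightarrow> 'a) \<Rightarrow> 'a::ab_group_add set \<Rightarrow> nat \<Rightarrow> bool" where
  "has_dim sc S d \<longleftrightarrow> (\<exists>B. finite B \<and> card B = d \<and> B \<subseteq> S \<and> findep sc B \<and>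
                          (\<forall>x\<in>S. in_fspan sc B x))"

definition clinear_on :: "(complex \<Rightarrow> 'a \<Rightarrow> 'a) \<Rightarrow> 'a::ab_group_add set \<Rightarrow> ('a \<Rightarrow> complex) \<Rightarrow> bool" where
  "clinear_on sc S \<phi> \<longleftrightarrow> (\<forall>x\<in>S. \<forall>y\<in>S. \<phi> (x + y) = \<phi> x + \<phi> y) \<and> (\<forall>c. \<forall>x\<in>S. \<phi> (sc c x) = c * \<phi> x)"

definition gcm :: "nat \<Rightarrow> (nat \<Rightarrow> nat \<Rightarrow> int) \<Rightarrow> bool" where
  "gcm l C \<longleftrightarrow> (\<forall>i<l. C i i = 2) \<and> (\<forall>i<l. \<forall>j<l. i \<noteq> j \<longrightarrow> C i j \<le> 0)
              \<and> (\<forall>i<l. \<forall>j<l. C i j = 0 \<longleftrightarrow> C j i = 0)"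

definition rows_indep :: "nat \<Rightarrow> (nat \<Rightarrow> nat \<Rightarrow> int) \<Rightarrow> nat set \<Rightarrow> bool" where
  "rows_indep l C S \<longleftrightarrow> (\<forall>c::nat \<Rightarrow> complex. (\<forall>j<l. (\<Sum>i\<in>S. c i * of_int (C i j)) = 0)
                            \<longrightarrow> (\<forall>i\<in>S. c i = 0))"

definition mat_rank :: "nat \<Rightarrow> (nat \<Rightarrow> nat \<Rightarrow> int) \<Rightarrow> nat" where
  "mat_rank l C = Max {card S | S. S \<subseteq> {..<l} \<and> rows_indep l C S}"

definition lie_algebra :: "(complex \<Rightarrow> 'g::ab_group_add \<Rightarrow> 'g) \<Rightarrow> ('g \<Rightarrow> 'g \<Rightarrow> 'g) \<Rightarrow> bool" where
  "lie_algebra sc br \<longleftrightarrow> vector_space sc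
     \<and> (\<forall>x y z. br (x + y) z = br x z + br y z) \<and> (\<forall>c x y. br (sc c x) y = sc c (br x y))
     \<and> (\<forall>x y z. br x (y + z) = br x y + br x z) \<and> (\<forall>c x y. br x (sc c y) = sc c (br x y))
     \<and> (\<forall>x. br x x = 0)
     \<and> (\<forall>x y z. br x (br y z) + br y (br z x) + br z (br x y) = 0)"

definition lie_subalgebra :: "(complex \<Rightarrow> 'g \<Rightarrow> 'g) \<Rightarrow> ('g \<Rightarrow> 'g \<Rightarrow> 'g) \<Rightarrow> 'g::ab_group_add set \<Rightarrow> bool" where
  "lie_subalgebra sc br S \<longleftrightarrow> csubspace sc S \<and> (\<forall>x\<in>S. \<forall>y\<in>S. br x y \<in> S)"

definition lie_ideal :: "(complex \<Rightarrow> 'g \<Rightarrow> 'g) \<Rightarrow> ('g \<Rightarrow> 'g \<Rightarrow> 'g) \<Rightarrow> 'g::ab_group_add set \<Rightarrow> bool" where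
  "lie_ideal sc br J \<longleftrightarrow> csubspace sc J \<and> (\<forall>x. \<forall>y\<in>J. br x y \<in> J)"

definition derived :: "(complex \<Rightarrow> 'g \<Rightarrow> 'g) \<Rightarrow> ('g \<Rightarrow> 'g \<Rightarrow> 'g) \<Rightarrow> 'g::ab_group_add set" where
  "derived sc br = \<Inter>{S. csubspace sc S \<and> (\<forall>x y. br x y \<in> S)}"

text \<open>The whole type 'g (with sc, br) is the Kac--Moody algebra g(C) in Kac's sense:
  (hh, al, cr) is a realization of the GCM C (hh of dimension 2l - rank C, simple roots
  al i in hh^* linearly independent, coroots cr i in hh linearly independent,
  al j (cr i) = C i j); g is generated by hh and the e i, f i subject to the defining
  relations, and g has no nonzero ideal meeting hh trivially.  This characterizes
  g(C) = g~(C)/r up to isomorphism.\<close>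
definition kac_moody ::
  "(complex \<Rightarrow> 'g::ab_group_add \<Rightarrow> 'g) \<Rightarrow> ('g \<Rightarrow> 'g \<Rightarrow> 'g) \<Rightarrow> nat \<Rightarrow> (nat \<Rightarrow> nat \<Rightarrow> int) \<Rightarrow>
   'g set \<Rightarrow> (nat \<Rightarrow> 'g \<Rightarrow> complex) \<Rightarrow> (nat \<Rightarrow> 'g) \<Rightarrow> (nat \<Rightarrow> 'g) \<Rightarrow> (nat \<Rightarrow> 'g) \<Rightarrow> bool" where
  "kac_moody sc br l C hh al cr e f \<longleftrightarrow>
     lie_algebra sc br \<and> gcm l C
     \<and> csubspace sc hh \<and> has_dim sc hh (2 * l - mat_rank l C)
     \<and> (\<forall>i<l. cr i \<in> hh) \<and> (\<forall>i<l. clinear_on sc hh (al i))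
     \<and> (\<forall>c::nat \<Rightarrow> complex. (\<Sum>i<l. sc (c i) (cr i)) = 0 \<longrightarrow> (\<forall>i<l. c i = 0))
     \<and> (\<forall>c::nat \<Rightarrow> complex. (\<forall>x\<in>hh. (\<Sum>i<l. c i * al i x) = 0) \<longrightarrow> (\<forall>i<l. c i = 0))
     \<and> (\<forall>i<l. \<forall>j<l. al j (cr i) = of_int (C i j))
     \<and> (\<forall>x\<in>hh. \<forall>y\<in>hh. br x y = 0)
     \<and> (\<forall>i<l. \<forall>j<l. br (e i) (f j) = (if i = j then cr i else 0))
     \<and> (\<forall>x\<in>hh. \<forall>i<l. br x (e i) = sc (al i x) (e i))
     \<and> (\<forall>x\<in>hh. \<forall>i<l. br x (f i) = sc (- al i x) (f i))
     \<and> (\<forall>S. lie_subalgebra sc br S \<and> hh \<subseteq> S \<and> e ` {..<l} \<subseteq> S \<and> f ` {..<l} \<subseteq> S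
            \<longrightarrow> S = UNIV)
     \<and> (\<forall>J. lie_ideal sc br J \<and> J \<inter> hh = {0} \<longrightarrow> J = {0})"

definition root_space :: "(complex \<Rightarrow> 'g::ab_group_add \<Rightarrow> 'g) \<Rightarrow> ('g \<Rightarrow> 'g \<Rightarrow> 'g) \<Rightarrow> 'g set \<Rightarrow> ('g \<Rightarrow> complex) \<Rightarrow> 'g set" where
  "root_space sc br hh \<alpha> = {x. \<forall>y\<in>hh. br y x = sc (\<alpha> y) x}"

definition nplus :: "(complex \<Rightarrow> 'g \<Rightarrow> 'g) \<Rightarrow> ('g \<Rightarrow> 'g \<Rightarrow> 'g) \<Rightarrow> nat \<Rightarrow> 'g set \<Rightarrow> (nat \<Rightarrow> 'g \<Rightarrow> complex) \<Rightarrow> 'g::ab_group_add set" where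
  "nplus sc br l hh al = \<Inter>{S. csubspace sc S \<and>
      (\<forall>k::nat \<Rightarrow> nat. (\<exists>i<l. k i \<noteq> 0) \<longrightarrow>
          root_space sc br hh (\<lambda>y. \<Sum>i<l. of_nat (k i) * al i y) \<subseteq> S)}"

text \<open>Exponent vectors m in Z^n are functions nat => int vanishing from n on.
  An element of A = C[t_1^{+-1},...,t_n^{+-1}] is a finitely supported coefficient
  function a, a = sum_m a(m) t^m.\<close>
definition expo :: "nat \<Rightarrow> (nat \<Rightarrow> int) set" where
  "expo n = {m. \<forall>i\<ge>n. m i = 0}"

definition laurent :: "nat \<Rightarrow> ((nat \<Rightarrow> int) \<Rightarrow> complex) set" where
  "laurent n = {a. finite {m. a m \<noteq> 0} \<and> {m. a m \<noteq> 0} \<subseteq> expo n}"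

definition lmult :: "((nat \<Rightarrow> int) \<Rightarrow> complex) \<Rightarrow> ((nat \<Rightarrow> int) \<Rightarrow> complex) \<Rightarrow> (nat \<Rightarrow> int) \<Rightarrow> complex" where
  "lmult a b = (\<lambda>m. \<Sum>k\<in>{k. a k \<noteq> 0}. a k * b (\<lambda>i. m i - k i))"

definition laurent_ideal :: "nat \<Rightarrow> ((nat \<Rightarrow> int) \<Rightarrow> complex) set \<Rightarrow> bool" where
  "laurent_ideal n I \<longleftrightarrow> I \<subseteq> laurent n \<and> (\<lambda>_. 0) \<in> I
     \<and> (\<forall>a\<in>I. \<forall>b\<in>I. (\<lambda>m. a m + b m) \<in> I)
     \<and> (\<forall>a\<in>laurent n. \<forall>b\<in>I. lmult a b \<in> I)"

text \<open>Co-finite: dim A/I < infinity, i.e. A is spanned modulo I by finitely many elements.\<close>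
definition cofinite_ideal :: "nat \<Rightarrow> ((nat \<Rightarrow> int) \<Rightarrow> complex) set \<Rightarrow> bool" where
  "cofinite_ideal n I \<longleftrightarrow> laurent_ideal n I \<and>
     (\<exists>B. finite B \<and> B \<subseteq> laurent n \<and>
        (\<forall>a\<in>laurent n. \<exists>c. (\<lambda>m. a m - (\<Sum>b\<in>B. c b * b m)) \<in> I))"

text \<open>A module structure on the complex vector space ('v, sv) for the Lie algebra
  G' \<otimes> A \<oplus> h'' is given by act X m (the action of X \<otimes> t^m, X in G', m in Z^n)
  and actd h (the action of h in h''); the action of a general element is the linear
  extension.\<close>
definition loop_module ::
  "(complex \<Rightarrow> 'g::ab_group_add \<Rightarrow> 'g) \<Rightarrow> ('g \<Rightarrow> 'g \<Rightarrow> 'g) \<Rightarrow> nat \<Rightarrow> 'g set \<Rightarrow>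
   (complex \<Rightarrow> 'v::ab_group_add \<Rightarrow> 'v) \<Rightarrow> ('g \<Rightarrow> (nat \<Rightarrow> int) \<Rightarrow> 'v \<Rightarrow> 'v) \<Rightarrow> ('g \<Rightarrow> 'v \<Rightarrow> 'v) \<Rightarrow> bool" where
  "loop_module sc br n h2 sv act actd \<longleftrightarrow>
     vector_space sv \<and>
     (let G1 = derived sc br in
      (\<forall>X\<in>G1. \<forall>m\<in>expo n. \<forall>v w. act X m (v + w) = act X m v + act X m w)
    \<and> (\<forall>X\<in>G1. \<forall>m\<in>expo n. \<forall>c v. act X m (sv c v) = sv c (act X m v))
    \<and> (\<forall>X\<in>G1. \<forall>Y\<in>G1. \<forall>m\<in>expo n. \<forall>v. act (X + Y) m v = act X m v + act Y m v)
    \<and> (\<forall>X\<in>G1. \<forall>m\<in>expo n. \<forall>c v. act (sc c X) m v = sv c (act X m v))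
    \<and> (\<forall>x\<in>h2. \<forall>v w. actd x (v + w) = actd x v + actd x w)
    \<and> (\<forall>x\<in>h2. \<forall>c v. actd x (sv c v) = sv c (actd x v))
    \<and> (\<forall>x\<in>h2. \<forall>y\<in>h2. \<forall>v. actd (x + y) v = actd x v + actd y v)
    \<and> (\<forall>x\<in>h2. \<forall>c v. actd (sc c x) v = sv c (actd x v))
    \<and> (\<forall>X\<in>G1. \<forall>Y\<in>G1. \<forall>m\<in>expo n. \<forall>k\<in>expo n. \<forall>v.
          act X m (act Y k v) - act Y k (act X m v) = act (br X Y) (\<lambda>i. m i + k i) v)
    \<and> (\<forall>x\<in>h2. \<forall>X\<in>G1. \<forall>m\<in>expo n. \<forall>v.
          actd x (act X m v) - act X m (actd x v) = act (br x X) m v)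
    \<and> (\<forall>x\<in>h2. \<forall>y\<in>h2. \<forall>v. actd x (actd y v) = actd y (actd x v)))"

definition irreducible_module ::
  "(complex \<Rightarrow> 'g::ab_group_add \<Rightarrow> 'g) \<Rightarrow> ('g \<Rightarrow> 'g \<Rightarrow> 'g) \<Rightarrow> nat \<Rightarrow> 'g set \<Rightarrow>
   (complex \<Rightarrow> 'v::ab_group_add \<Rightarrow> 'v) \<Rightarrow> ('g \<Rightarrow> (nat \<Rightarrow> int) \<Rightarrow> 'v \<Rightarrow> 'v) \<Rightarrow> ('g \<Rightarrow> 'v \<Rightarrow> 'v) \<Rightarrow> bool" where
  "irreducible_module sc br n h2 sv act actd \<longleftrightarrow>
     loop_module sc br n h2 sv act actd \<and> (\<exists>v::'v. v \<noteq> 0) \<and>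
     (\<forall>W. csubspace sv W \<and> (\<forall>X\<in>derived sc br. \<forall>m\<in>expo n. \<forall>w\<in>W. act X m w \<in> W)
          \<and> (\<forall>x\<in>h2. \<forall>w\<in>W. actd x w \<in> W) \<longrightarrow> W = {0} \<or> W = UNIV)"

definition weight_space ::
  "'g set \<Rightarrow> 'g set \<Rightarrow> (complex \<Rightarrow> 'v \<Rightarrow> 'v) \<Rightarrow> ('g \<Rightarrow> (nat \<Rightarrow> int) \<Rightarrow> 'v \<Rightarrow> 'v) \<Rightarrow> ('g \<Rightarrow> 'v \<Rightarrow> 'v)
   \<Rightarrow> ('g \<Rightarrow> complex) \<Rightarrow> 'v set" where
  "weight_space h1 h2 sv act actd lam =
     {v. (\<forall>x\<in>h1. act x (\<lambda>_. 0) v = sv (lam x) v) \<and> (\<forall>x\<in>h2. actd x v = sv (lam x) v)}"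

end

theory Submission
  imports Defs "HOL-Library.Set_Algebras"
begin

text \<open>
  (\<open>\<Rightarrow>\<close>) Let \<open>J\<close> be the largest ideal of \<open>A\<close> with \<open>\<psi>(h' \<otimes> J) = 0\<close>. The vectors
  \<open>(f\<^sub>i \<otimes> a) v\<^sub>0\<close> lie in the finite-dimensional weight spaces of weights \<open>\<lambda> - \<alpha>\<^sub>i\<close>, so
  \<open>a \<mapsto> \<Sum>\<^sub>i (f\<^sub>i \<otimes> a) v\<^sub>0\<close> has a kernel of finite codimension. If \<open>(f\<^sub>i \<otimes> a) v\<^sub>0 = 0\<close>, applying
  \<open>e\<^sub>i \<otimes> t\<^sup>m\<close> gives \<open>\<psi>(h\<^sub>i \<otimes> t\<^sup>m a) = 0\<close>; as the coroots \<open>h\<^sub>i\<close> span \<open>h'\<close>, the kernel lies in \<open>J\<close>.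

  (\<open>\<Leftarrow>\<close>) If \<open>\<psi>(h' \<otimes> I) = 0\<close>, the submodule generated by \<open>(N\<^sup>- \<otimes> I) v\<^sub>0\<close> has no component
  of weight \<open>\<lambda>\<close>, so by irreducibility it is zero, and then \<open>N\<^sup>- \<otimes> I\<close> annihilates
  \<open>V = U(N\<^sup>- \<otimes> A) v\<^sub>0\<close>. Hence \<open>V\<close> is spanned by the vectors
  \<open>(f\<^sub>i\<^sub>1 \<otimes> b\<^sub>1) \<cdots> (f\<^sub>i\<^sub>k \<otimes> b\<^sub>k) v\<^sub>0\<close> with \<open>b\<^sub>j\<close> in a finite set spanning \<open>A/I\<close>;
  those of a fixed weight have a fixed length \<open>k\<close>, so there are finitely many of them.
\<close>

lemma csubspace_iff_subspace:
  assumes "vector_space s"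
  shows "csubspace s S \<longleftrightarrow> module.subspace s S"
proof -
  interpret vector_space s by fact
  show ?thesis by (simp add: csubspace_def subspace_def)
qed

lemma in_fspan_imp_span:
  assumes "vector_space s" "in_fspan s B w"
  shows "w \<in> module.span s B"
proof -
  interpret vector_space s by fact
  show ?thesis using assms(2) unfolding in_fspan_def by (auto intro: span_sum span_scale span_base)
qed

definition lincomb :: "('a \<Rightarrow> 'b \<Rightarrow> 'b) \<Rightarrow> ('i \<Rightarrow> 'a::zero) \<Rightarrow> ('i \<Rightarrow> 'b) \<Rightarrow> 'b::comm_monoid_add" where
  "lincomb s a G = (\<Sum>m\<in>{m. a m \<noteq> 0}. s (a m) (G m))"

lemma lincomb_zero_coeffs [simp]: "lincomb s (\<lambda>m. 0) G = 0"
  by (simp add: lincomb_def)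

lemma lincomb_cong: "(\<And>m. a m \<noteq> 0 \<Longrightarrow> G m = H m) \<Longrightarrow> lincomb s a G = lincomb s a H"
  unfolding lincomb_def by (intro sum.cong) auto

lemma lincomb_reindex:
  assumes "inj h" "\<And>j. a j \<noteq> 0 \<Longrightarrow> j \<in> range h"
  shows "lincomb s a G = lincomb s (a \<circ> h) (G \<circ> h)"
proof -
  have "{j. a j \<noteq> 0} = h ` {k. a (h k) \<noteq> 0}" using assms(2) by auto
  then show ?thesis
    unfolding lincomb_def by (simp add: sum.reindex inj_on_subset[OF assms(1)])
qed

lemma lincomb_commute:
  fixes T :: "'b::ab_group_add \<Rightarrow> 'b"
  assumes "\<And>x y. T (x + y) = T x + T y" "\<And>c x. T (s c x) = s c (T x)"
  shows "T (lincomb s a G) = lincomb s a (\<lambda>m. T (G m))"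
proof -
  interpret additive T by standard (rule assms(1))
  show ?thesis unfolding lincomb_def by (simp add: sum assms(2))
qed

context vector_space
begin

lemma lincomb_superset:
  "finite S \<Longrightarrow> {m. a m \<noteq> 0} \<subseteq> S \<Longrightarrow> lincomb scale a G = (\<Sum>m\<in>S. a m *s G m)"
  unfolding lincomb_def by (rule sum.mono_neutral_left) auto

lemma lincomb_add_coeffs:
  assumes "finite {m. a m \<noteq> 0}" "finite {m. b m \<noteq> 0}"
  shows "lincomb scale (\<lambda>m. a m + b m) G = lincomb scale a G + lincomb scale b G"
proof -
  let ?S = "{m. a m \<noteq> 0} \<union> {m. b m \<noteq> 0}"
  have fin: "finite ?S" using assms by simp
  have "lincomb scale (\<lambda>m. a m + b m) G = (\<Sum>m\<in>?S. a m *s G m + b m *s G m)"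
    by (subst lincomb_superset[OF fin]) (auto simp: scale_left_distrib)
  also have "\<dots> = lincomb scale a G + lincomb scale b G"
    by (simp add: sum.distrib lincomb_superset[OF fin])
  finally show ?thesis .
qed

lemma lincomb_scale_coeffs: "lincomb scale (\<lambda>m. c * a m) G = c *s lincomb scale a G"
  by (cases "c = 0") (simp_all add: lincomb_def scale_sum_right)

lemma lincomb_sum_coeffs:
  assumes "finite K" "\<And>k. k \<in> K \<Longrightarrow> finite {m. g k m \<noteq> 0}"
  shows "lincomb scale (\<lambda>m. \<Sum>k\<in>K. g k m) G = (\<Sum>k\<in>K. lincomb scale (g k) G)"
  using assms
proof (induction K rule: finite_induct)
  case (insert k K)
  have "{m. (\<Sum>k\<in>K. g k m) \<noteq> 0} \<subseteq> (\<Union>k\<in>K. {m. g k m \<noteq> 0})"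
    by (auto intro: ccontr simp: sum.neutral)
  then have "finite {m. (\<Sum>k\<in>K. g k m) \<noteq> 0}"
    by (rule finite_subset) (use insert in auto)
  with insert show ?case by (simp add: lincomb_add_coeffs)
qed simp

lemma lincomb_add: "lincomb scale a (\<lambda>m. G m + H m) = lincomb scale a G + lincomb scale a H"
  by (simp add: lincomb_def scale_right_distrib sum.distrib)

lemma lincomb_scale: "lincomb scale a (\<lambda>m. c *s G m) = c *s lincomb scale a G"
  by (simp add: lincomb_def scale_sum_right mult.commute)

lemma lincomb_sum:
  "finite K \<Longrightarrow> lincomb scale a (\<lambda>m. \<Sum>k\<in>K. G k m) = (\<Sum>k\<in>K. lincomb scale a (G k))"
  by (induction K rule: finite_induct) (simp_all add: lincomb_def scale_right_distrib sum.distrib)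

lemma lincomb_indicator: "lincomb scale (\<lambda>j. if j = m then 1 else 0) G = G m"
proof -
  have "{j. (if j = m then 1 else 0) \<noteq> (0::'a)} = {m}" by auto
  then show ?thesis by (simp add: lincomb_def)
qed

lemma lincomb_in_subspace:
  "subspace W \<Longrightarrow> (\<And>m. a m \<noteq> 0 \<Longrightarrow> G m \<in> W) \<Longrightarrow> lincomb scale a G \<in> W"
  unfolding lincomb_def by (auto intro: subspace_sum subspace_scale)

lemma lincomb_diff_lincomb:
  assumes "finite B" "\<And>b. b \<in> B \<Longrightarrow> finite {m. b m \<noteq> 0}" "finite {m. a m \<noteq> 0}"
  shows "lincomb scale (\<lambda>m. a m - (\<Sum>b\<in>B. c b * b m)) G
       = lincomb scale a G - (\<Sum>b\<in>B. c b *s lincomb scale b G)"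
proof -
  have fin: "finite {m. (\<Sum>b\<in>B. c b * b m) \<noteq> 0}"
  proof (rule finite_subset)
    show "{m. (\<Sum>b\<in>B. c b * b m) \<noteq> 0} \<subseteq> (\<Union>b\<in>B. {m. b m \<noteq> 0})"
      by (auto intro: ccontr simp: sum.neutral)
  qed (use assms in auto)
  have fin': "finite {m. (-1) * (\<Sum>b\<in>B. c b * b m) \<noteq> 0}" using fin by simp
  have "lincomb scale (\<lambda>m. a m - (\<Sum>b\<in>B. c b * b m)) G
      = lincomb scale (\<lambda>m. a m + (-1) * (\<Sum>b\<in>B. c b * b m)) G"
    by simp
  also have "\<dots> = lincomb scale a G - lincomb scale (\<lambda>m. \<Sum>b\<in>B. c b * b m) G"
    by (simp only: lincomb_add_coeffs[OF assms(3) fin'] lincomb_scale_coeffs) simp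
  also have "lincomb scale (\<lambda>m. \<Sum>b\<in>B. c b * b m) G = (\<Sum>b\<in>B. c b *s lincomb scale b G)"
    using assms(1,2) by (simp add: lincomb_sum_coeffs lincomb_scale_coeffs finite_subset[of _ "{m. _ m \<noteq> 0}"])
  finally show ?thesis by simp
qed

lemma weight_component_eq_0:
  assumes lin: "\<And>h x y. h \<in> H \<Longrightarrow> T h (x + y) = T h x + T h y"
      "\<And>h c x. h \<in> H \<Longrightarrow> T h (c *s x) = c *s T h x"
    and "finite S"
    and w0: "\<And>h. h \<in> H \<Longrightarrow> T h w0 = \<nu> h *s w0"
    and g: "\<And>j h. j \<in> S \<Longrightarrow> h \<in> H \<Longrightarrow> T h (g j) = \<mu> j h *s g j"
    and distinct: "\<And>j. j \<in> S \<Longrightarrow> \<exists>h\<in>H. \<mu> j h \<noteq> \<nu> h"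
    and sum0: "w0 + sum g S = 0"
  shows "w0 = 0"
  using \<open>finite S\<close> w0 g distinct sum0
proof (induction S arbitrary: w0 g rule: finite_induct)
  case (insert j S)
  obtain h where h: "h \<in> H" "\<mu> j h \<noteq> \<nu> h" using insert.prems(3) by blast
  interpret Th: additive "T h" by standard (rule lin(1)[OF h(1)])
  \<comment> \<open>applying \<open>T h - \<mu> j h\<close> kills the summand \<open>g j\<close> and rescales the others\<close>
  let ?d = "\<nu> h - \<mu> j h"
  let ?g = "\<lambda>i. (\<mu> i h - \<mu> j h) *s g i"
  have "T h (w0 + g j + sum g S) - \<mu> j h *s (w0 + g j + sum g S) = 0"
    using insert.prems(4) insert.hyps by (simp add: add.assoc Th.zero)
  then have "?d *s w0 + sum ?g S = 0"
    using insert.prems(1)[OF h(1)] insert.prems(2)[OF _ h(1)]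
    by (simp add: Th.add Th.sum scale_right_distrib scale_left_diff_distrib scale_sum_right
        sum_subtractf algebra_simps)
  moreover have "T h' (?d *s w0) = \<nu> h' *s (?d *s w0)" if "h' \<in> H" for h'
    using insert.prems(1)[OF that] lin(2)[OF that] by (simp add: mult.commute)
  moreover have "T h' (?g i) = \<mu> i h' *s ?g i" if "i \<in> S" "h' \<in> H" for i h'
    using insert.prems(2)[of i h'] lin(2)[OF that(2)] that by (simp add: mult.commute)
  ultimately have "?d *s w0 = 0"
    using insert.IH[of "?d *s w0" ?g] insert.prems(3) by blast
  then show ?case using h(2) by simp
qed simp

lemma weight_component_eq_0_list:
  assumes lin: "\<And>h x y. h \<in> H \<Longrightarrow> T h (x + y) = T h x + T h y"
      "\<And>h c x. h \<in> H \<Longrightarrow> T h (c *s x) = c *s T h x"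
    and w0: "\<And>h. h \<in> H \<Longrightarrow> T h w0 = \<nu> h *s w0"
    and L: "\<And>p h. p \<in> set L \<Longrightarrow> h \<in> H \<Longrightarrow> T h (snd p) = fst p h *s snd p"
    and distinct: "\<And>p. p \<in> set L \<Longrightarrow> \<exists>h\<in>H. fst p h \<noteq> \<nu> h"
    and sum0: "w0 + sum_list (map snd L) = 0"
  shows "w0 = 0"
proof (rule weight_component_eq_0[OF lin _ w0, where S="{..<length L}" and g="\<lambda>j. snd (L ! j)"
      and \<mu>="\<lambda>j. fst (L ! j)"])
  show "w0 + (\<Sum>j<length L. snd (L ! j)) = 0"
    using sum0 by (simp add: sum_list_sum_nth lessThan_atLeast0)
qed (use L[OF nth_mem] distinct[OF nth_mem] in auto)

end

interpretation complex_mult: vector_space "(*) :: complex \<Rightarrow> complex \<Rightarrow> complex"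
  by unfold_locales (simp_all add: algebra_simps)

lemma finite_image_cofinite_kernel:
  assumes "vector_space s" and "finite Bw"
    and img: "\<And>a. a \<in> laurent n \<Longrightarrow> lincomb s a G \<in> module.span s Bw"
  shows "\<exists>B. finite B \<and> B \<subseteq> laurent n \<and>
     (\<forall>a\<in>laurent n. \<exists>c. lincomb s (\<lambda>m. a m - (\<Sum>b\<in>B. c b * b m)) G = 0)"
proof -
  interpret vector_space s by fact
  let ?U = "(\<lambda>a. lincomb s a G) ` laurent n"
  obtain Bu where Bu: "Bu \<subseteq> ?U" "independent Bu" "?U \<subseteq> span Bu" "card Bu = dim ?U"
    by (rule basis_exists)
  have "?U \<subseteq> span Bw" using img by (auto simp: image_subset_iff)
  then have "finite Bu"
    using independent_span_bound[OF \<open>finite Bw\<close> Bu(2)] Bu(1) by (meson order_trans)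
  have "\<forall>u\<in>Bu. \<exists>a. a \<in> laurent n \<and> lincomb s a G = u" using Bu(1) by blast
  then obtain pre where pre: "\<And>u. u \<in> Bu \<Longrightarrow> pre u \<in> laurent n \<and> lincomb s (pre u) G = u"
    by (metis bchoice)
  have "inj_on pre Bu"
  proof (rule inj_onI)
    fix u u' assume "u \<in> Bu" "u' \<in> Bu" "pre u = pre u'"
    then show "u = u'" by (metis pre)
  qed
  show ?thesis
  proof (intro exI[of _ "pre ` Bu"] conjI ballI)
    show "finite (pre ` Bu)" "pre ` Bu \<subseteq> laurent n" using \<open>finite Bu\<close> pre by auto
    fix a assume a: "a \<in> laurent n"
    then have "lincomb s a G \<in> span Bu" using Bu(3) by (auto simp: image_subset_iff)
    then obtain r where r: "lincomb s a G = (\<Sum>u\<in>Bu. s (r u) u)"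
      using span_finite[OF \<open>finite Bu\<close>] by auto
    have "lincomb s (\<lambda>m. a m - (\<Sum>b\<in>pre ` Bu. r (lincomb s b G) * b m)) G
          = lincomb s a G - (\<Sum>b\<in>pre ` Bu. s (r (lincomb s b G)) (lincomb s b G))"
      by (rule lincomb_diff_lincomb) (use \<open>finite Bu\<close> pre a in \<open>auto simp: laurent_def\<close>)
    also have "(\<Sum>b\<in>pre ` Bu. s (r (lincomb s b G)) (lincomb s b G)) = (\<Sum>u\<in>Bu. s (r u) u)"
      by (simp add: sum.reindex[OF \<open>inj_on pre Bu\<close>] pre)
    finally show "\<exists>c. lincomb s (\<lambda>m. a m - (\<Sum>b\<in>pre ` Bu. c b * b m)) G = 0"
      using r by auto
  qed
qed

section \<open>Laurent polynomials\<close>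

definition monom :: "(nat \<Rightarrow> int) \<Rightarrow> (nat \<Rightarrow> int) \<Rightarrow> complex" where
  "monom m = (\<lambda>j. if j = m then 1 else 0)"

definition shift :: "(nat \<Rightarrow> int) \<Rightarrow> ((nat \<Rightarrow> int) \<Rightarrow> complex) \<Rightarrow> (nat \<Rightarrow> int) \<Rightarrow> complex" where
  "shift m a = (\<lambda>j. a (\<lambda>i. j i - m i))"

lemma shift_zero [simp]: "shift (\<lambda>i. 0) a = a"
  by (simp add: shift_def)

lemma lincomb_shift: "lincomb s (shift m a) G = lincomb s a (\<lambda>k. G (\<lambda>i. m i + k i))"
proof -
  let ?h = "\<lambda>k i. m i + k i"
  have "inj ?h" by (rule injI) (simp add: fun_eq_iff)
  moreover have "j \<in> range ?h" for j
    by (rule range_eqI[of _ _ "\<lambda>i. j i - m i"]) simp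
  ultimately have "lincomb s (shift m a) G = lincomb s (shift m a \<circ> ?h) (G \<circ> ?h)"
    by (rule lincomb_reindex)
  also have "shift m a \<circ> ?h = a" by (simp add: shift_def comp_def)
  finally show ?thesis by (simp add: comp_def)
qed

lemma expo_add: "m \<in> expo n \<Longrightarrow> k \<in> expo n \<Longrightarrow> (\<lambda>i. m i + k i) \<in> expo n"
  by (simp add: expo_def)

lemma expo_zero: "(\<lambda>i. 0) \<in> expo n"
  by (simp add: expo_def)

lemma laurent_finite: "a \<in> laurent n \<Longrightarrow> finite {m. a m \<noteq> 0}"
  by (simp add: laurent_def)

lemma laurent_expo: "a \<in> laurent n \<Longrightarrow> a m \<noteq> 0 \<Longrightarrow> m \<in> expo n"
  by (auto simp: laurent_def)

lemma laurent_monom: "m \<in> expo n \<Longrightarrow> monom m \<in> laurent n"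
proof -
  have "{j. monom m j \<noteq> 0} = {m}" by (auto simp: monom_def)
  then show "m \<in> expo n \<Longrightarrow> monom m \<in> laurent n" by (simp add: laurent_def)
qed

lemma laurent_add:
  assumes "a \<in> laurent n" "b \<in> laurent n"
  shows "(\<lambda>m. a m + b m) \<in> laurent n"
proof -
  have sub: "{m. a m + b m \<noteq> 0} \<subseteq> {m. a m \<noteq> 0} \<union> {m. b m \<noteq> 0}" by auto
  have "finite {m. a m + b m \<noteq> 0}"
    by (rule finite_subset[OF sub]) (use assms in \<open>simp add: laurent_def\<close>)
  moreover have "{m. a m + b m \<noteq> 0} \<subseteq> expo n" using sub assms by (auto simp: laurent_def)
  ultimately show ?thesis by (simp add: laurent_def)
qed

lemma laurent_scale: "a \<in> laurent n \<Longrightarrow> (\<lambda>m. c * a m) \<in> laurent n"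
proof -
  have sub: "{m. c * a m \<noteq> 0} \<subseteq> {m. a m \<noteq> 0}" by auto
  then show "a \<in> laurent n \<Longrightarrow> (\<lambda>m. c * a m) \<in> laurent n"
    unfolding laurent_def using finite_subset[OF sub] by blast
qed

lemma laurent_sum:
  "finite K \<Longrightarrow> (\<And>k. k \<in> K \<Longrightarrow> g k \<in> laurent n) \<Longrightarrow> (\<lambda>m. \<Sum>k\<in>K. g k m) \<in> laurent n"
proof (induction K rule: finite_induct)
  case empty
  then show ?case by (simp add: laurent_def)
next
  case (insert k K)
  then show ?case by (simp add: laurent_add)
qed

lemma laurent_diff_lincomb:
  assumes "a \<in> laurent n" "finite B" "B \<subseteq> laurent n"
  shows "(\<lambda>m. a m - (\<Sum>b\<in>B. c b * b m)) \<in> laurent n"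
proof -
  have "(\<lambda>m. (-1) * (\<Sum>b\<in>B. c b * b m)) \<in> laurent n"
    using assms(2,3) by (intro laurent_scale laurent_sum) (auto intro: laurent_scale)
  from laurent_add[OF assms(1) this] show ?thesis by simp
qed

lemma support_shift: "{j. shift m a j \<noteq> 0} = (\<lambda>k i. m i + k i) ` {k. a k \<noteq> 0}"
proof (intro set_eqI iffI)
  fix j assume "j \<in> {j. shift m a j \<noteq> 0}"
  then show "j \<in> (\<lambda>k i. m i + k i) ` {k. a k \<noteq> 0}"
    by (intro image_eqI[of _ _ "\<lambda>i. j i - m i"]) (auto simp: shift_def)
qed (auto simp: shift_def)

lemma laurent_shift: "a \<in> laurent n \<Longrightarrow> m \<in> expo n \<Longrightarrow> shift m a \<in> laurent n"
  unfolding laurent_def by (auto simp: support_shift intro: expo_add)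

lemma shift_eq_lmult: "shift m a = lmult (monom m) a"
proof
  fix j
  have "{k. monom m k \<noteq> 0} = {m}" by (auto simp: monom_def)
  then show "shift m a j = lmult (monom m) a j" by (simp add: shift_def lmult_def monom_def)
qed

lemma laurent_lmult:
  assumes c: "c \<in> laurent n" and a: "a \<in> laurent n"
  shows "lmult c a \<in> laurent n"
proof -
  let ?S = "(\<lambda>(k, j) i. k i + j i) ` ({k. c k \<noteq> 0} \<times> {j. a j \<noteq> 0})"
  have "{m. lmult c a m \<noteq> 0} \<subseteq> ?S"
  proof
    fix m assume "m \<in> {m. lmult c a m \<noteq> 0}"
    then obtain k where "c k \<noteq> 0" "a (\<lambda>i. m i - k i) \<noteq> 0"
      unfolding lmult_def by (auto elim: sum.not_neutral_contains_not_neutral)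
    then show "m \<in> ?S" by (intro image_eqI[where x="(k, \<lambda>i. m i - k i)"]) auto
  qed
  moreover have "finite ?S" using c a by (simp add: laurent_finite)
  moreover have "?S \<subseteq> expo n" using laurent_expo[OF c] laurent_expo[OF a] by (auto intro: expo_add)
  ultimately show ?thesis unfolding laurent_def by (auto intro: finite_subset)
qed

lemma shift_lmult:
  "shift m (lmult c a) = (\<lambda>j. \<Sum>k\<in>{k. c k \<noteq> 0}. c k * shift (\<lambda>i. m i + k i) a j)"
  by (simp add: shift_def lmult_def diff_diff_eq)

lemma mem_set_plus_left: "(a::'a::monoid_add) \<in> A \<Longrightarrow> 0 \<in> B \<Longrightarrow> a \<in> A + B"
  using set_plus_intro[of a A 0 B] by simp

lemma mem_set_plus_right: "0 \<in> A \<Longrightarrow> (b::'a::monoid_add) \<in> B \<Longrightarrow> b \<in> A + B"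
  using set_plus_intro[of 0 A b B] by simp

lemma (in vector_space) subspace_set_plus: "subspace A \<Longrightarrow> subspace B \<Longrightarrow> subspace (A + B)"
proof -
  have "A + B = {x + y |x y. x \<in> A \<and> y \<in> B}" by (auto simp: set_plus_def)
  then show "subspace A \<Longrightarrow> subspace B \<Longrightarrow> subspace (A + B)" by (simp add: subspace_sums)
qed

section \<open>Triangular decomposition of Kac--Moody algebras\<close>

locale complex_lie_algebra =
  fixes sc :: "complex \<Rightarrow> 'g::ab_group_add \<Rightarrow> 'g" and br :: "'g \<Rightarrow> 'g \<Rightarrow> 'g"
  assumes lie: "lie_algebra sc br"
begin

sublocale G: vector_space sc
  using lie by (simp add: lie_algebra_def)

abbreviation G' :: "'g set" where "G' \<equiv> derived sc br"

lemma br_add_left: "br (x + y) z = br x z + br y z"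
  using lie by (simp add: lie_algebra_def)
lemma br_add_right: "br x (y + z) = br x y + br x z"
  using lie by (simp add: lie_algebra_def)
lemma br_scale_left: "br (sc c x) y = sc c (br x y)"
  using lie by (simp add: lie_algebra_def)
lemma br_scale_right: "br x (sc c y) = sc c (br x y)"
  using lie by (simp add: lie_algebra_def)
lemma br_self: "br x x = 0"
  using lie by (simp add: lie_algebra_def)
lemma jacobi: "br x (br y z) + br y (br z x) + br z (br x y) = 0"
  using lie by (simp add: lie_algebra_def)

lemma br_zero_left [simp]: "br 0 y = 0"
  using br_add_left[of 0 0 y] by simp
lemma br_zero_right [simp]: "br x 0 = 0"
  using br_add_right[of x 0 0] by simp

lemma br_anticomm: "br x y = - br y x"
proof -
  have "0 = br (x + y) (x + y)" by (simp add: br_self)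
  also have "\<dots> = br x y + br y x" by (simp only: br_add_left br_add_right) (simp add: br_self)
  finally have "br x y + br y x = 0" by (rule sym)
  then show ?thesis by (simp add: eq_neg_iff_add_eq_0)
qed

lemma br_minus_right: "br x (- y) = - br x y"
  using br_add_right[of x y "- y"] by (simp add: eq_neg_iff_add_eq_0 add.commute)
lemma br_diff_right: "br x (y - z) = br x y - br x z"
  using br_add_right[of x y "- z"] by (simp add: br_minus_right)

lemma br_leibniz: "br a (br b c) = br (br a b) c + br b (br a c)"
proof -
  have "br a (br b c) + br b (br c a) + br c (br a b) = 0" by (rule jacobi)
  moreover have "br c (br a b) = - br (br a b) c" by (rule br_anticomm)
  moreover have "br b (br c a) = - br b (br a c)" by (subst br_anticomm[of c a]) (simp add: br_minus_right)
  ultimately show ?thesis by (simp add: algebra_simps eq_neg_iff_add_eq_0)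
qed

lemma br_br_left: "br (br a b) c = br a (br b c) - br b (br a c)"
  unfolding eq_diff_eq by (rule br_leibniz[symmetric])

lemma br_sum_list_right: "br g (sum_list xs) = sum_list (map (br g) xs)"
  by (induction xs) (simp_all add: br_add_right)

lemma subspace_derived: "G.subspace G'"
  unfolding derived_def G.subspace_def csubspace_def by auto

lemma br_in_derived: "br x y \<in> G'"
  unfolding derived_def by auto

lemma eigenvector_in_derived: "br x y = sc c y \<Longrightarrow> c \<noteq> 0 \<Longrightarrow> y \<in> G'"
  using G.subspace_scale[OF subspace_derived br_in_derived, of "1 / c" x y] by simp

lemma derived_subset: "G.subspace S \<Longrightarrow> (\<And>x y. br x y \<in> S) \<Longrightarrow> G' \<subseteq> S"
  unfolding derived_def G.subspace_def csubspace_def by blast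

end

locale kac_moody_algebra =
  fixes sc :: "complex \<Rightarrow> 'g::ab_group_add \<Rightarrow> 'g" and br :: "'g \<Rightarrow> 'g \<Rightarrow> 'g"
    and l :: nat and C :: "nat \<Rightarrow> nat \<Rightarrow> int" and hh :: "'g set"
    and al :: "nat \<Rightarrow> 'g \<Rightarrow> complex" and cr e f :: "nat \<Rightarrow> 'g"
  assumes KM: "kac_moody sc br l C hh al cr e f"
begin

sublocale complex_lie_algebra sc br
  using KM by unfold_locales (simp add: kac_moody_def)

abbreviation h1 :: "'g set" where "h1 \<equiv> hh \<inter> G'"

lemma subspace_cartan: "G.subspace hh"
  using KM csubspace_iff_subspace[OF G.vector_space_axioms] by (simp add: kac_moody_def)
lemma subspace_h1: "G.subspace h1"
  by (simp add: G.subspace_inter subspace_cartan subspace_derived)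
lemma coroot_in_cartan: "i < l \<Longrightarrow> cr i \<in> hh"
  using KM by (simp add: kac_moody_def)
lemma simple_root_linear: "i < l \<Longrightarrow> clinear_on sc hh (al i)"
  using KM by (simp add: kac_moody_def)
lemma simple_roots_independent: "(\<forall>x\<in>hh. (\<Sum>i<l. c i * al i x) = 0) \<Longrightarrow> i < l \<Longrightarrow> c i = 0"
  using KM unfolding kac_moody_def by blast
lemma cartan_abelian: "x \<in> hh \<Longrightarrow> y \<in> hh \<Longrightarrow> br x y = 0"
  using KM by (simp add: kac_moody_def)
lemma br_e_f: "i < l \<Longrightarrow> j < l \<Longrightarrow> br (e i) (f j) = (if i = j then cr i else 0)"
  using KM by (simp add: kac_moody_def)
lemma br_cartan_e: "x \<in> hh \<Longrightarrow> i < l \<Longrightarrow> br x (e i) = sc (al i x) (e i)"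
  using KM by (simp add: kac_moody_def)
lemma br_cartan_f: "x \<in> hh \<Longrightarrow> i < l \<Longrightarrow> br x (f i) = sc (- al i x) (f i)"
  using KM by (simp add: kac_moody_def)
lemma generated_by_cartan_e_f:
  "lie_subalgebra sc br S \<Longrightarrow> hh \<subseteq> S \<Longrightarrow> e ` {..<l} \<subseteq> S \<Longrightarrow> f ` {..<l} \<subseteq> S \<Longrightarrow> S = UNIV"
  using KM unfolding kac_moody_def by blast

lemma simple_root_add: "i < l \<Longrightarrow> x \<in> hh \<Longrightarrow> y \<in> hh \<Longrightarrow> al i (x + y) = al i x + al i y"
  using simple_root_linear by (simp add: clinear_on_def)

lemma simple_root_nonzero:
  assumes "i < l"
  shows "\<exists>x\<in>hh. al i x \<noteq> 0"
proof -
  have "(\<Sum>j<l. (if j = i then 1 else 0) * al j x) = al i x" for x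
    using assms by (simp add: if_distrib[of "\<lambda>c. c * _"] cong: if_cong)
  then show ?thesis
    using simple_roots_independent[of "\<lambda>j. if j = i then 1 else 0" i] assms by auto
qed

lemma e_in_derived: "i < l \<Longrightarrow> e i \<in> G'"
proof -
  assume "i < l"
  then obtain x where "x \<in> hh" "al i x \<noteq> 0" using simple_root_nonzero by blast
  with \<open>i < l\<close> show ?thesis by (intro eigenvector_in_derived[of x _ "al i x"]) (simp_all add: br_cartan_e)
qed

lemma f_in_derived: "i < l \<Longrightarrow> f i \<in> G'"
proof -
  assume "i < l"
  then obtain x where "x \<in> hh" "al i x \<noteq> 0" using simple_root_nonzero by blast
  with \<open>i < l\<close> show ?thesis by (intro eigenvector_in_derived[of x _ "- al i x"]) (simp_all add: br_cartan_f)
qed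

lemma coroot_in_h1: "i < l \<Longrightarrow> cr i \<in> h1"
  using br_e_f[of i i] br_in_derived[of "e i" "f i"] coroot_in_cartan by simp

inductive_set ad_closure :: "(nat \<Rightarrow> 'g) \<Rightarrow> 'g set" for gen where
  gen: "i < l \<Longrightarrow> gen i \<in> ad_closure gen"
| zero: "0 \<in> ad_closure gen"
| add: "x \<in> ad_closure gen \<Longrightarrow> y \<in> ad_closure gen \<Longrightarrow> x + y \<in> ad_closure gen"
| scale: "x \<in> ad_closure gen \<Longrightarrow> sc c x \<in> ad_closure gen"
| br: "i < l \<Longrightarrow> x \<in> ad_closure gen \<Longrightarrow> br (gen i) x \<in> ad_closure gen"

lemma subspace_ad_closure: "G.subspace (ad_closure gen)"
  unfolding G.subspace_def by (auto intro: ad_closure.intros)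

lemma ad_closure_derived:
  assumes "\<And>i. i < l \<Longrightarrow> gen i \<in> G'"
  shows "x \<in> ad_closure gen \<Longrightarrow> x \<in> G'"
  by (induction x rule: ad_closure.induct)
    (auto intro: assms G.subspace_0 G.subspace_add G.subspace_scale subspace_derived br_in_derived)

lemma br_ad_closure:
  "x \<in> ad_closure gen \<Longrightarrow> y \<in> ad_closure gen \<Longrightarrow> br x y \<in> ad_closure gen"
proof (induction x arbitrary: y rule: ad_closure.induct)
  case (br i x)
  then show ?case
    using G.subspace_diff[OF subspace_ad_closure] by (subst br_br_left) (simp add: ad_closure.intros)
qed (simp_all add: br_add_left br_scale_left ad_closure.intros)

lemma br_cartan_ad_closure:
  assumes "\<And>i. i < l \<Longrightarrow> br h (gen i) = sc (w i) (gen i)"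
  shows "x \<in> ad_closure gen \<Longrightarrow> br h x \<in> ad_closure gen"
proof (induction x rule: ad_closure.induct)
  case (gen i)
  then show ?case by (simp add: assms ad_closure.intros)
next
  case (br i x)
  then show ?case by (subst br_leibniz) (simp add: assms br_scale_left ad_closure.intros)
qed (simp_all add: br_add_right br_scale_right ad_closure.intros)

abbreviation Npos :: "'g set" where "Npos \<equiv> ad_closure e"
abbreviation Nneg :: "'g set" where "Nneg \<equiv> ad_closure f"

lemma br_cartan_Npos: "h \<in> hh \<Longrightarrow> x \<in> Npos \<Longrightarrow> br h x \<in> Npos"
  by (rule br_cartan_ad_closure[where w="\<lambda>i. al i h"]) (simp add: br_cartan_e)
lemma br_cartan_Nneg: "h \<in> hh \<Longrightarrow> x \<in> Nneg \<Longrightarrow> br h x \<in> Nneg"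
  by (rule br_cartan_ad_closure[where w="\<lambda>i. - al i h"]) (simp add: br_cartan_f)
lemma br_Npos_cartan: "h \<in> hh \<Longrightarrow> x \<in> Npos \<Longrightarrow> br x h \<in> Npos"
  using br_cartan_Npos[of h x] G.subspace_neg[OF subspace_ad_closure] by (simp add: br_anticomm[of x])
lemma br_Nneg_cartan: "h \<in> hh \<Longrightarrow> x \<in> Nneg \<Longrightarrow> br x h \<in> Nneg"
  using br_cartan_Nneg[of h x] G.subspace_neg[OF subspace_ad_closure] by (simp add: br_anticomm[of x])
lemma Npos_derived: "x \<in> Npos \<Longrightarrow> x \<in> G'"
  by (rule ad_closure_derived[OF e_in_derived])
lemma Nneg_derived: "x \<in> Nneg \<Longrightarrow> x \<in> G'"
  by (rule ad_closure_derived[OF f_in_derived])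

abbreviation coroot_span :: "'g set" where "coroot_span \<equiv> G.span (cr ` {..<l})"

lemma coroot_span_h1: "coroot_span \<subseteq> h1"
  by (rule G.span_minimal) (use coroot_in_h1 subspace_h1 in auto)

lemma coroot_span_cartan: "x \<in> coroot_span \<Longrightarrow> x \<in> hh"
  using coroot_span_h1 by blast

lemma coroot_span_coroot: "i < l \<Longrightarrow> cr i \<in> coroot_span"
  by (simp add: G.span_base)

lemma subspace_Nneg_coroot_span: "G.subspace (Nneg + coroot_span)"
  by (simp add: G.subspace_set_plus subspace_ad_closure)

lemma subspace_triangular: "G.subspace (Nneg + coroot_span + Npos)"
  by (simp add: G.subspace_set_plus subspace_ad_closure)

lemma subspace_triangular_cartan: "G.subspace (Nneg + hh + Npos)"
  by (simp add: G.subspace_set_plus subspace_ad_closure subspace_cartan)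

lemma Nneg_triangular: "x \<in> Nneg \<Longrightarrow> x \<in> Nneg + coroot_span + Npos"
  by (intro mem_set_plus_left ad_closure.zero G.span_zero)
lemma Npos_triangular: "x \<in> Npos \<Longrightarrow> x \<in> Nneg + coroot_span + Npos"
  by (intro mem_set_plus_right G.subspace_0 subspace_Nneg_coroot_span)

lemma br_e_Nneg:
  assumes "i < l"
  shows "y \<in> Nneg \<Longrightarrow> br (e i) y \<in> Nneg + coroot_span"
proof (induction y rule: ad_closure.induct)
  case (gen j)
  then show ?case
    using br_e_f[of i j] coroot_span_coroot[of i] assms
    by (auto intro: mem_set_plus_right ad_closure.zero G.subspace_0 subspace_Nneg_coroot_span)
next
  case zero
  then show ?case by (simp add: G.subspace_0 subspace_Nneg_coroot_span)
next
  case (add x y)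
  then show ?case by (simp add: br_add_right G.subspace_add subspace_Nneg_coroot_span)
next
  case (scale x c)
  then show ?case by (simp add: br_scale_right G.subspace_scale subspace_Nneg_coroot_span)
next
  case (br j y)
  from br obtain a c where ac: "a \<in> Nneg" "c \<in> coroot_span" "br (e i) y = a + c"
    by (auto elim: set_plus_elim)
  have "br (br (e i) (f j)) y \<in> Nneg"
    using br_e_f[of i j] br assms coroot_in_cartan br_cartan_Nneg by (auto intro: ad_closure.intros)
  moreover have "br (f j) (br (e i) y) \<in> Nneg"
    using ac br(1) coroot_span_cartan br_Nneg_cartan[of _ "f j"]
    by (simp add: br_add_right ad_closure.intros)
  ultimately have "br (e i) (br (f j) y) \<in> Nneg"
    by (subst br_leibniz) (simp add: ad_closure.intros)
  then show ?case by (intro mem_set_plus_left G.span_zero)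
qed

lemma br_e_triangular:
  assumes "i < l" "z \<in> Nneg + coroot_span + Npos"
  shows "br (e i) z \<in> Nneg + coroot_span + Npos"
proof -
  from assms(2) obtain a c b where "a \<in> Nneg" "c \<in> coroot_span" "b \<in> Npos" "z = a + c + b"
    by (auto elim!: set_plus_elim)
  moreover have "br (e i) a \<in> Nneg + coroot_span + Npos"
    by (rule mem_set_plus_left[OF br_e_Nneg[OF assms(1) \<open>a \<in> Nneg\<close>] ad_closure.zero])
  moreover have "br (e i) c \<in> Npos"
    using br_Npos_cartan[OF coroot_span_cartan[OF \<open>c \<in> coroot_span\<close>]] assms(1)
    by (simp add: ad_closure.gen)
  moreover have "br (e i) b \<in> Npos" using assms(1) \<open>b \<in> Npos\<close> by (rule ad_closure.br)
  ultimately show ?thesis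
    by (simp add: br_add_right Npos_triangular G.subspace_add subspace_triangular)
qed

lemma br_Npos_Nneg: "x \<in> Npos \<Longrightarrow> y \<in> Nneg \<Longrightarrow> br x y \<in> Nneg + coroot_span + Npos"
proof (induction x arbitrary: y rule: ad_closure.induct)
  case (gen i)
  then show ?case using br_e_Nneg by (auto intro: mem_set_plus_left ad_closure.zero)
next
  case zero
  then show ?case by (simp add: G.subspace_0 subspace_triangular)
next
  case (add x x')
  then show ?case by (simp add: br_add_left G.subspace_add subspace_triangular)
next
  case (scale x c)
  then show ?case by (simp add: br_scale_left G.subspace_scale subspace_triangular)
next
  case (br i x)
  from br_e_Nneg[OF br(1) br(4)] obtain a c where ac: "a \<in> Nneg" "c \<in> coroot_span" "br (e i) y = a + c"
    by (auto elim: set_plus_elim)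
  have "br x c \<in> Npos" using br_Npos_cartan[OF coroot_span_cartan[OF ac(2)] br(2)] .
  then have "br x (br (e i) y) \<in> Nneg + coroot_span + Npos"
    using ac br.IH[OF ac(1)] by (simp add: br_add_right G.subspace_add subspace_triangular Npos_triangular)
  moreover have "br (e i) (br x y) \<in> Nneg + coroot_span + Npos"
    using br by (simp add: br_e_triangular)
  ultimately show ?case by (subst br_br_left) (simp add: G.subspace_diff subspace_triangular)
qed

lemma br_triangular:
  assumes "x \<in> Nneg + hh + Npos" "z \<in> Nneg + hh + Npos"
  shows "br x z \<in> Nneg + coroot_span + Npos"
proof -
  let ?T = "Nneg + coroot_span + Npos"
  have br_parts: "br u z \<in> ?T"
    if "\<And>a'. a' \<in> Nneg \<Longrightarrow> br u a' \<in> ?T" "\<And>h. h \<in> hh \<Longrightarrow> br u h \<in> ?T"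
      "\<And>b'. b' \<in> Npos \<Longrightarrow> br u b' \<in> ?T" for u
  proof -
    from assms(2) obtain a' h b' where "a' \<in> Nneg" "h \<in> hh" "b' \<in> Npos" "z = a' + h + b'"
      by (auto elim!: set_plus_elim)
    with that show ?thesis by (simp add: br_add_right G.subspace_add subspace_triangular)
  qed
  have Nneg_case: "br a z \<in> ?T" if "a \<in> Nneg" for a
  proof (rule br_parts)
    show "br a b' \<in> ?T" if "b' \<in> Npos" for b'
      using br_Npos_Nneg[OF that \<open>a \<in> Nneg\<close>] G.subspace_neg[OF subspace_triangular]
      by (simp add: br_anticomm[of a])
  qed (use that in \<open>auto simp: Nneg_triangular br_ad_closure br_Nneg_cartan\<close>)
  have cartan_case: "br h z \<in> ?T" if "h \<in> hh" for h
    using that G.subspace_0[OF subspace_triangular]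
    by (intro br_parts) (auto simp: cartan_abelian Nneg_triangular Npos_triangular br_cartan_Nneg br_cartan_Npos)
  have Npos_case: "br b z \<in> ?T" if "b \<in> Npos" for b
    using that br_Npos_Nneg
    by (intro br_parts) (auto simp: Npos_triangular br_ad_closure br_Npos_cartan)
  from assms(1) obtain a h b where "a \<in> Nneg" "h \<in> hh" "b \<in> Npos" "x = a + h + b"
    by (auto elim!: set_plus_elim)
  then show ?thesis using Nneg_case cartan_case Npos_case
    by (simp add: br_add_left G.subspace_add subspace_triangular)
qed

lemma triangular_decomposition: "Nneg + hh + Npos = UNIV"
proof (rule generated_by_cartan_e_f)
  have "Nneg + coroot_span + Npos \<subseteq> Nneg + hh + Npos"
    using coroot_span_cartan by (intro set_plus_mono2) auto
  then show "lie_subalgebra sc br (Nneg + hh + Npos)"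
    unfolding lie_subalgebra_def csubspace_iff_subspace[OF G.vector_space_axioms]
    using subspace_triangular_cartan br_triangular by blast
  show "hh \<subseteq> Nneg + hh + Npos"
    by (auto intro: mem_set_plus_left mem_set_plus_right ad_closure.zero)
  show "e ` {..<l} \<subseteq> Nneg + hh + Npos"
    by (auto intro: mem_set_plus_right G.subspace_0 G.subspace_set_plus subspace_ad_closure
        subspace_cartan ad_closure.gen)
  show "f ` {..<l} \<subseteq> Nneg + hh + Npos"
    by (auto intro: mem_set_plus_left ad_closure.zero G.subspace_0 subspace_cartan ad_closure.gen)
qed

lemma derived_subset_triangular: "G' \<subseteq> Nneg + coroot_span + Npos"
  using br_triangular triangular_decomposition by (intro derived_subset subspace_triangular) auto

definition root_lattice_elem :: "(nat \<Rightarrow> nat) \<Rightarrow> 'g \<Rightarrow> complex" where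
  "root_lattice_elem k y = (\<Sum>i<l. of_nat (k i) * al i y)"

definition nontrivial :: "(nat \<Rightarrow> nat) \<Rightarrow> bool" where
  "nontrivial k \<longleftrightarrow> (\<exists>i<l. k i \<noteq> 0)"

definition unit_vec :: "nat \<Rightarrow> nat \<Rightarrow> nat" where
  "unit_vec i = (\<lambda>j. if j = i then 1 else 0)"

lemma root_lattice_elem_unit_vec: "i < l \<Longrightarrow> root_lattice_elem (unit_vec i) y = al i y"
proof -
  have "root_lattice_elem (unit_vec i) y = (\<Sum>j<l. if j = i then al j y else 0)"
    unfolding root_lattice_elem_def by (rule sum.cong) (auto simp: unit_vec_def)
  then show "i < l \<Longrightarrow> root_lattice_elem (unit_vec i) y = al i y" by simp
qed

lemma root_lattice_elem_add_unit:
  "i < l \<Longrightarrow> root_lattice_elem (\<lambda>j. k j + unit_vec i j) y = root_lattice_elem k y + al i y"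
  using root_lattice_elem_unit_vec[of i y]
  by (simp add: root_lattice_elem_def sum.distrib distrib_right)

lemma nontrivial_add_unit: "i < l \<Longrightarrow> nontrivial (\<lambda>j. k j + unit_vec i j)"
  by (auto simp: nontrivial_def unit_vec_def)

lemma root_lattice_elem_nonzero:
  assumes "nontrivial k"
  shows "\<exists>y\<in>hh. root_lattice_elem k y \<noteq> 0"
proof (rule ccontr)
  assume "\<not> ?thesis"
  then have "\<forall>y\<in>hh. (\<Sum>i<l. of_nat (k i) * al i y) = 0" by (simp add: root_lattice_elem_def)
  moreover obtain i where "i < l" "k i \<noteq> 0" using assms by (auto simp: nontrivial_def)
  ultimately show False using simple_roots_independent[of "\<lambda>i. of_nat (k i)" i] by simp
qed

definition root_vector_sums :: "complex \<Rightarrow> 'g set" where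
  "root_vector_sums \<sigma> = {sum_list (map snd xs) |xs. \<forall>p\<in>set xs. nontrivial (fst p) \<and>
     snd p \<in> root_space sc br hh (\<lambda>y. \<sigma> * root_lattice_elem (fst p) y)}"

lemma root_space_scale: "v \<in> root_space sc br hh \<mu> \<Longrightarrow> sc c v \<in> root_space sc br hh \<mu>"
  by (simp add: root_space_def br_scale_right mult.commute)

lemma br_root_space:
  assumes "v \<in> root_space sc br hh \<mu>" "\<And>h. h \<in> hh \<Longrightarrow> br h g = sc (w h) g"
  shows "br g v \<in> root_space sc br hh (\<lambda>y. \<mu> y + w y)"
  unfolding root_space_def
proof (intro CollectI ballI)
  fix h assume h: "h \<in> hh"
  have "br h (br g v) = br (br h g) v + br g (br h v)" by (rule br_leibniz)
  also have "\<dots> = sc (\<mu> h + w h) (br g v)"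
    using assms h by (simp add: root_space_def br_scale_left br_scale_right G.scale_left_distrib)
  finally show "br h (br g v) = sc (\<mu> h + w h) (br g v)" .
qed

lemma root_vector_sums_add:
  assumes "x \<in> root_vector_sums \<sigma>" "y \<in> root_vector_sums \<sigma>"
  shows "x + y \<in> root_vector_sums \<sigma>"
proof -
  obtain xs ys where "x = sum_list (map snd xs)" "y = sum_list (map snd ys)"
    "\<forall>p\<in>set (xs @ ys). nontrivial (fst p) \<and>
       snd p \<in> root_space sc br hh (\<lambda>y. \<sigma> * root_lattice_elem (fst p) y)"
    using assms unfolding root_vector_sums_def by auto
  then show ?thesis unfolding root_vector_sums_def by (intro CollectI exI[of _ "xs @ ys"]) simp
qed

lemma root_vector_sums_scale:
  assumes "x \<in> root_vector_sums \<sigma>"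
  shows "sc c x \<in> root_vector_sums \<sigma>"
proof -
  obtain xs where xs: "x = sum_list (map snd xs)"
    "\<forall>p\<in>set xs. nontrivial (fst p) \<and> snd p \<in> root_space sc br hh (\<lambda>y. \<sigma> * root_lattice_elem (fst p) y)"
    using assms unfolding root_vector_sums_def by blast
  have "sc c x = sum_list (map snd (map (\<lambda>p. (fst p, sc c (snd p))) xs))"
    unfolding xs(1) by (induction xs) (simp_all add: G.scale_right_distrib)
  then show ?thesis unfolding root_vector_sums_def using xs(2)
    by (intro CollectI exI[of _ "map (\<lambda>p. (fst p, sc c (snd p))) xs"]) (auto simp: root_space_scale)
qed

lemma br_root_vector_sums:
  assumes i: "i < l" and g: "\<And>h. h \<in> hh \<Longrightarrow> br h g = sc (\<sigma> * al i h) g"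
    and x: "x \<in> root_vector_sums \<sigma>"
  shows "br g x \<in> root_vector_sums \<sigma>"
proof -
  obtain xs where xs: "x = sum_list (map snd xs)"
    "\<forall>p\<in>set xs. nontrivial (fst p) \<and> snd p \<in> root_space sc br hh (\<lambda>y. \<sigma> * root_lattice_elem (fst p) y)"
    using x unfolding root_vector_sums_def by blast
  let ?ys = "map (\<lambda>p. (\<lambda>j. fst p j + unit_vec i j, br g (snd p))) xs"
  have "br g x = sum_list (map snd ?ys)"
    unfolding xs(1) br_sum_list_right by (simp add: comp_def)
  moreover have "nontrivial (fst q) \<and>
      snd q \<in> root_space sc br hh (\<lambda>y. \<sigma> * root_lattice_elem (fst q) y)" if "q \<in> set ?ys" for q
  proof -
    from that obtain p where p: "p \<in> set xs" "q = (\<lambda>j. fst p j + unit_vec i j, br g (snd p))"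
      by auto
    have "br g (snd p) \<in> root_space sc br hh (\<lambda>y. \<sigma> * root_lattice_elem (fst p) y + \<sigma> * al i y)"
      using p(1) xs(2) g by (intro br_root_space) auto
    then show ?thesis
      using p nontrivial_add_unit[OF i] by (simp add: root_lattice_elem_add_unit[OF i] distrib_left)
  qed
  ultimately show ?thesis unfolding root_vector_sums_def by blast
qed

lemma ad_closure_root_vector_sums:
  assumes gen: "\<And>i h. i < l \<Longrightarrow> h \<in> hh \<Longrightarrow> br h (gen i) = sc (\<sigma> * al i h) (gen i)"
  shows "x \<in> ad_closure gen \<Longrightarrow> x \<in> root_vector_sums \<sigma>"
proof (induction x rule: ad_closure.induct)
  case (gen i)
  have "root_lattice_elem (unit_vec i) = al i"
    using root_lattice_elem_unit_vec[OF gen] by (simp add: fun_eq_iff)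
  then have "gen i \<in> root_space sc br hh (\<lambda>y. \<sigma> * root_lattice_elem (unit_vec i) y)"
    using assms gen by (simp add: root_space_def)
  then show ?case
    using nontrivial_add_unit[OF gen, of "\<lambda>_. 0"] unfolding root_vector_sums_def
    by (intro CollectI exI[of _ "[(unit_vec i, gen i)]"]) simp
next
  case zero
  show ?case unfolding root_vector_sums_def by (intro CollectI exI[of _ "[]"]) simp
qed (simp_all add: root_vector_sums_add root_vector_sums_scale br_root_vector_sums gen)

lemma root_vector_in_derived:
  assumes "nontrivial k" "\<sigma> \<noteq> 0" "y \<in> root_space sc br hh (\<lambda>z. \<sigma> * root_lattice_elem k z)"
  shows "y \<in> G'"
proof -
  obtain h where "h \<in> hh" "root_lattice_elem k h \<noteq> 0" using root_lattice_elem_nonzero[OF assms(1)] by blast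
  then show ?thesis
    using assms(2,3) by (intro eigenvector_in_derived[of h _ "\<sigma> * root_lattice_elem k h"])
      (simp_all add: root_space_def)
qed

lemma Npos_root_vector_sums: "x \<in> Npos \<Longrightarrow> x \<in> root_vector_sums 1"
  by (rule ad_closure_root_vector_sums) (use br_cartan_e in auto)

lemma Nneg_root_vector_sums: "x \<in> Nneg \<Longrightarrow> x \<in> root_vector_sums (-1)"
  by (rule ad_closure_root_vector_sums) (use br_cartan_f in auto)

text \<open>Write \<open>x = a + c + b\<close> by the triangular decomposition: \<open>a + b = x - c\<close> commutes with
  \<open>hh\<close>, while \<open>a\<close> and \<open>b\<close> are sums of root vectors of nonzero roots, so \<open>a + b = 0\<close>.\<close>
lemma h1_subset_coroot_span: "h1 \<subseteq> coroot_span"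
proof
  fix x assume x: "x \<in> h1"
  with derived_subset_triangular obtain a c b
    where abc: "a \<in> Nneg" "c \<in> coroot_span" "b \<in> Npos" "x = a + c + b"
    by (auto elim!: set_plus_elim)
  from Nneg_root_vector_sums[OF abc(1)] obtain as where as: "a = sum_list (map snd as)"
    "\<forall>p\<in>set as. nontrivial (fst p) \<and> snd p \<in> root_space sc br hh (\<lambda>y. - root_lattice_elem (fst p) y)"
    unfolding root_vector_sums_def by auto
  from Npos_root_vector_sums[OF abc(3)] obtain bs where bs: "b = sum_list (map snd bs)"
    "\<forall>p\<in>set bs. nontrivial (fst p) \<and> snd p \<in> root_space sc br hh (root_lattice_elem (fst p))"
    unfolding root_vector_sums_def by auto
  let ?L = "map (\<lambda>p. (\<lambda>y. - root_lattice_elem (fst p) y, - snd p)) as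
    @ map (\<lambda>p. (root_lattice_elem (fst p), - snd p)) bs"
  have "x - c = 0"
  proof (rule G.weight_component_eq_0_list[where H=hh and T=br and \<nu>="\<lambda>y. 0" and L="?L"])
    show "br h (x - c) = sc 0 (x - c)" if "h \<in> hh" for h
      using that x coroot_span_cartan[OF abc(2)] by (simp add: br_diff_right cartan_abelian)
    show "br h (snd p) = sc (fst p h) (snd p)" if "p \<in> set ?L" "h \<in> hh" for p h
      using that as bs by (auto simp: root_space_def br_minus_right)
    show "\<exists>h\<in>hh. fst p h \<noteq> 0" if "p \<in> set ?L" for p
      using that as bs root_lattice_elem_nonzero by fastforce
    show "x - c + sum_list (map snd ?L) = 0"
      using abc(4) as(1) bs(1) by (simp add: comp_def uminus_sum_list_map[of snd, unfolded comp_def, symmetric]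
          algebra_simps)
  qed (simp_all add: br_add_right br_scale_right)
  then show "x \<in> coroot_span" using abc(2) by simp
qed

lemma h1_eq_coroot_span: "h1 = coroot_span"
  using h1_subset_coroot_span coroot_span_h1 by blast

end

section \<open>Highest weight modules over loop algebras\<close>

locale loop_module_setting = complex_lie_algebra sc br
  for sc :: "complex \<Rightarrow> 'g::ab_group_add \<Rightarrow> 'g" and br +
  fixes n :: nat and h2 :: "'g set" and sv :: "complex \<Rightarrow> 'v::ab_group_add \<Rightarrow> 'v"
    and act :: "'g \<Rightarrow> (nat \<Rightarrow> int) \<Rightarrow> 'v \<Rightarrow> 'v" and actd :: "'g \<Rightarrow> 'v \<Rightarrow> 'v"
  assumes module: "loop_module sc br n h2 sv act actd"
begin

sublocale V: vector_space sv
  using module by (simp add: loop_module_def)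

lemma act_add: "X \<in> G' \<Longrightarrow> m \<in> expo n \<Longrightarrow> act X m (v + w) = act X m v + act X m w"
  using module by (simp add: loop_module_def Let_def)
lemma act_scale: "X \<in> G' \<Longrightarrow> m \<in> expo n \<Longrightarrow> act X m (sv c v) = sv c (act X m v)"
  using module by (simp add: loop_module_def Let_def)
lemma act_add_elem: "X \<in> G' \<Longrightarrow> Y \<in> G' \<Longrightarrow> m \<in> expo n \<Longrightarrow> act (X + Y) m v = act X m v + act Y m v"
  using module by (simp add: loop_module_def Let_def)
lemma act_scale_elem: "X \<in> G' \<Longrightarrow> m \<in> expo n \<Longrightarrow> act (sc c X) m v = sv c (act X m v)"
  using module by (simp add: loop_module_def Let_def)
lemma actd_add: "x \<in> h2 \<Longrightarrow> actd x (v + w) = actd x v + actd x w"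
  using module by (simp add: loop_module_def Let_def)
lemma actd_scale: "x \<in> h2 \<Longrightarrow> actd x (sv c v) = sv c (actd x v)"
  using module by (simp add: loop_module_def Let_def)

lemma act_commutator:
  assumes "X \<in> G'" "Y \<in> G'" "m \<in> expo n" "k \<in> expo n"
  shows "act X m (act Y k v) = act Y k (act X m v) + act (br X Y) (\<lambda>i. m i + k i) v"
proof -
  have "act X m (act Y k v) - act Y k (act X m v) = act (br X Y) (\<lambda>i. m i + k i) v"
    using module assms by (simp add: loop_module_def Let_def)
  then show ?thesis by (simp add: diff_eq_eq add.commute)
qed

lemma actd_commutator:
  assumes "x \<in> h2" "X \<in> G'" "m \<in> expo n"
  shows "actd x (act X m v) = act X m (actd x v) + act (br x X) m v"
proof -
  have "actd x (act X m v) - act X m (actd x v) = act (br x X) m v"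
    using module assms by (simp add: loop_module_def Let_def)
  then show ?thesis by (simp add: diff_eq_eq add.commute)
qed

lemma act_zero [simp]: "X \<in> G' \<Longrightarrow> m \<in> expo n \<Longrightarrow> act X m 0 = 0"
  using act_add[of X m 0 0] by simp

lemma act_zero_elem [simp]: "m \<in> expo n \<Longrightarrow> act 0 m v = 0"
  using act_scale_elem[of 0 m 0 v] G.subspace_0[OF subspace_derived] by simp

lemma actd_zero [simp]: "x \<in> h2 \<Longrightarrow> actd x 0 = 0"
  using actd_add[of x 0 0] by simp

lemma act_sum_list:
  "X \<in> G' \<Longrightarrow> m \<in> expo n \<Longrightarrow> act X m (sum_list (map g L)) = sum_list (map (\<lambda>p. act X m (g p)) L)"
  by (induction L) (simp_all add: act_add)

text \<open>\<open>lp_act X a u\<close> is \<open>(X \<otimes> a) u\<close> for a Laurent polynomial \<open>a\<close>.\<close>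
definition lp_act :: "'g \<Rightarrow> ((nat \<Rightarrow> int) \<Rightarrow> complex) \<Rightarrow> 'v \<Rightarrow> 'v" where
  "lp_act X a u = lincomb sv a (\<lambda>m. act X m u)"

lemma lp_act_add:
  "X \<in> G' \<Longrightarrow> a \<in> laurent n \<Longrightarrow> lp_act X a (u + w) = lp_act X a u + lp_act X a w"
  unfolding lp_act_def V.lincomb_add[symmetric]
  by (rule lincomb_cong) (simp add: act_add laurent_expo)

lemma lp_act_scale: "X \<in> G' \<Longrightarrow> a \<in> laurent n \<Longrightarrow> lp_act X a (sv c u) = sv c (lp_act X a u)"
  unfolding lp_act_def V.lincomb_scale[symmetric]
  by (rule lincomb_cong) (simp add: act_scale laurent_expo)

lemma lp_act_zero: "X \<in> G' \<Longrightarrow> a \<in> laurent n \<Longrightarrow> lp_act X a 0 = 0"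
  using lp_act_add[of X a 0 0] by simp

lemma lp_act_add_elem:
  "X \<in> G' \<Longrightarrow> Y \<in> G' \<Longrightarrow> a \<in> laurent n \<Longrightarrow> lp_act (X + Y) a u = lp_act X a u + lp_act Y a u"
  unfolding lp_act_def V.lincomb_add[symmetric]
  by (rule lincomb_cong) (simp add: act_add_elem laurent_expo)

lemma lp_act_scale_elem: "X \<in> G' \<Longrightarrow> a \<in> laurent n \<Longrightarrow> lp_act (sc c X) a u = sv c (lp_act X a u)"
  unfolding lp_act_def V.lincomb_scale[symmetric]
  by (rule lincomb_cong) (simp add: act_scale_elem laurent_expo)

lemma lp_act_sum_list_elem:
  assumes "\<And>p. p \<in> set ys \<Longrightarrow> g p \<in> G'" "a \<in> laurent n"
  shows "lp_act (sum_list (map g ys)) a u = sum_list (map (\<lambda>p. lp_act (g p) a u) ys)"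
  using assms(1)
proof (induction ys)
  case Nil
  show ?case using lp_act_scale_elem[of 0 a 0 u] G.subspace_0[OF subspace_derived] assms(2) by simp
next
  case (Cons p ys)
  have "sum_list (map g ys) \<in> G'"
    using Cons.prems
    by (induction ys) (auto intro: G.subspace_0 G.subspace_add subspace_derived)
  with Cons assms(2) show ?case by (simp add: lp_act_add_elem)
qed

lemma lp_act_monom: "m \<in> expo n \<Longrightarrow> lp_act X (monom m) u = act X m u"
  by (simp add: lp_act_def monom_def V.lincomb_indicator)

lemma lp_act_commutator:
  assumes X: "X \<in> G'" and Y: "Y \<in> G'" and m: "m \<in> expo n" and a: "a \<in> laurent n"
  shows "act X m (lp_act Y a u) = lp_act Y a (act X m u) + lp_act (br X Y) (shift m a) u"
proof -
  have "act X m (lp_act Y a u) = lincomb sv a (\<lambda>k. act X m (act Y k u))"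
    unfolding lp_act_def by (rule lincomb_commute) (simp_all add: act_add act_scale X m)
  also have "\<dots> = lincomb sv a (\<lambda>k. act Y k (act X m u) + act (br X Y) (\<lambda>i. m i + k i) u)"
    by (rule lincomb_cong) (rule act_commutator[OF X Y m laurent_expo[OF a]])
  also have "\<dots> = lp_act Y a (act X m u) + lp_act (br X Y) (shift m a) u"
    by (simp add: V.lincomb_add lp_act_def lincomb_shift)
  finally show ?thesis .
qed

lemma lp_actd_commutator:
  assumes x: "x \<in> h2" and Y: "Y \<in> G'" and a: "a \<in> laurent n"
  shows "actd x (lp_act Y a u) = lp_act Y a (actd x u) + lp_act (br x Y) a u"
proof -
  have "actd x (lp_act Y a u) = lincomb sv a (\<lambda>k. actd x (act Y k u))"
    unfolding lp_act_def by (rule lincomb_commute) (simp_all add: actd_add actd_scale x)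
  also have "\<dots> = lincomb sv a (\<lambda>k. act Y k (actd x u) + act (br x Y) k u)"
    by (rule lincomb_cong) (rule actd_commutator[OF x Y laurent_expo[OF a]])
  also have "\<dots> = lp_act Y a (actd x u) + lp_act (br x Y) a u"
    by (simp add: V.lincomb_add lp_act_def)
  finally show ?thesis .
qed

end

locale highest_weight_setting =
  kac_moody_algebra sc br l C hh al cr e f + loop_module_setting sc br n h2 sv act actd
  for sc :: "complex \<Rightarrow> 'g::ab_group_add \<Rightarrow> 'g" and br l C hh al cr e f n h2
    and sv :: "complex \<Rightarrow> 'v::ab_group_add \<Rightarrow> 'v" and act actd +
  fixes psi1 :: "'g \<Rightarrow> (nat \<Rightarrow> int) \<Rightarrow> complex" and psi2 :: "'g \<Rightarrow> complex" and v0 :: 'v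
  assumes h2_sub: "csubspace sc h2" "h2 \<subseteq> hh"
    and h2_compl: "(hh \<inter> derived sc br) \<inter> h2 = {0}"
                  "\<forall>x\<in>hh. \<exists>a\<in>hh \<inter> derived sc br. \<exists>b\<in>h2. x = a + b"
    and psi_lin: "\<forall>m\<in>expo n. clinear_on sc (hh \<inter> derived sc br) (\<lambda>x. psi1 x m)"
                 "clinear_on sc h2 psi2"
    and irr: "irreducible_module sc br n h2 sv act actd"
    and hw: "v0 \<noteq> 0"
            "\<forall>X\<in>nplus sc br l hh al. \<forall>m\<in>expo n. act X m v0 = 0"
            "\<forall>x\<in>hh \<inter> derived sc br. \<forall>m\<in>expo n. act x m v0 = sv (psi1 x m) v0"
            "\<forall>x\<in>h2. actd x v0 = sv (psi2 x) v0"
begin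

lemma h2_cartan: "x \<in> h2 \<Longrightarrow> x \<in> hh"
  using h2_sub by blast

lemma zero_in_h2: "0 \<in> h2"
  using h2_sub(1) by (simp add: csubspace_def)

lemma irreducible:
  "V.subspace W \<Longrightarrow> (\<And>X m w. X \<in> G' \<Longrightarrow> m \<in> expo n \<Longrightarrow> w \<in> W \<Longrightarrow> act X m w \<in> W) \<Longrightarrow>
    (\<And>x w. x \<in> h2 \<Longrightarrow> w \<in> W \<Longrightarrow> actd x w \<in> W) \<Longrightarrow> W = {0} \<or> W = UNIV"
  using irr unfolding irreducible_module_def csubspace_iff_subspace[OF V.vector_space_axioms] by blast

lemma e_in_nplus: "i < l \<Longrightarrow> e i \<in> nplus sc br l hh al"
  unfolding nplus_def
proof (intro InterI, elim CollectE conjE)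
  fix S
  assume "i < l" and S: "\<forall>k::nat \<Rightarrow> nat. (\<exists>i<l. k i \<noteq> 0) \<longrightarrow>
      root_space sc br hh (\<lambda>y. \<Sum>i<l. of_nat (k i) * al i y) \<subseteq> S"
  have "e i \<in> root_space sc br hh (root_lattice_elem (unit_vec i))"
    using \<open>i < l\<close> by (simp add: root_space_def br_cartan_e root_lattice_elem_unit_vec)
  moreover have "root_space sc br hh (root_lattice_elem (unit_vec i)) \<subseteq> S"
    using S[rule_format, of "unit_vec i"] \<open>i < l\<close>
    by (simp add: root_lattice_elem_def[abs_def] unit_vec_def)
  ultimately show "e i \<in> S" by blast
qed

lemma act_e_v0: "i < l \<Longrightarrow> m \<in> expo n \<Longrightarrow> act (e i) m v0 = 0"
  using hw(2) e_in_nplus by blast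

text \<open>The weight \<open>\<lambda>\<close> of \<open>v\<^sub>0\<close>; only its values on \<open>h1 \<union> h2\<close> matter.\<close>
definition hw_weight :: "'g \<Rightarrow> complex" where
  "hw_weight x = (if x \<in> h2 then psi2 x else psi1 x (\<lambda>i. 0))"

abbreviation wspace :: "('g \<Rightarrow> complex) \<Rightarrow> 'v set" where
  "wspace \<mu> \<equiv> weight_space h1 h2 sv act actd \<mu>"

lemma psi1_scale: "x \<in> h1 \<Longrightarrow> m \<in> expo n \<Longrightarrow> psi1 (sc c x) m = c * psi1 x m"
  using psi_lin(1) by (simp add: clinear_on_def)

lemma psi1_add: "x \<in> h1 \<Longrightarrow> y \<in> h1 \<Longrightarrow> m \<in> expo n \<Longrightarrow> psi1 (x + y) m = psi1 x m + psi1 y m"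
  using psi_lin(1) by (simp add: clinear_on_def)

lemma hw_weight_h1:
  assumes x: "x \<in> h1"
  shows "hw_weight x = psi1 x (\<lambda>i. 0)"
proof (cases "x \<in> h2")
  case True
  then have "x = 0" using h2_compl(1) x by blast
  have "psi2 (sc 0 0) = 0 * psi2 0" using psi_lin(2) zero_in_h2 unfolding clinear_on_def by blast
  moreover have "psi1 (sc 0 0) (\<lambda>i. 0) = 0 * psi1 0 (\<lambda>i. 0)"
    using G.subspace_0[OF subspace_h1] expo_zero by (rule psi1_scale)
  ultimately show ?thesis using \<open>x = 0\<close> True by (simp add: hw_weight_def)
qed (simp add: hw_weight_def)

lemma weight_space_cong:
  "(\<And>x. x \<in> h1 \<union> h2 \<Longrightarrow> \<mu> x = \<nu> x) \<Longrightarrow> wspace \<mu> = wspace \<nu>"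
  unfolding weight_space_def by auto

lemma subspace_wspace: "V.subspace (wspace \<mu>)"
  unfolding V.subspace_def weight_space_def
  by (simp add: expo_zero act_add act_scale actd_add actd_scale V.scale_right_distrib mult.commute)

lemma v0_in_wspace: "v0 \<in> wspace hw_weight"
  unfolding weight_space_def
proof (intro CollectI conjI ballI)
  fix x assume "x \<in> h1"
  then show "act x (\<lambda>_. 0) v0 = sv (hw_weight x) v0" using hw(3) expo_zero by (simp add: hw_weight_h1)
next
  fix x assume "x \<in> h2"
  then show "actd x v0 = sv (hw_weight x) v0" using hw(4) by (simp add: hw_weight_def)
qed

lemma lp_act_v0_wspace:
  assumes y: "y \<in> G'" "y \<in> root_space sc br hh \<mu>" and a: "a \<in> laurent n"
  shows "lp_act y a v0 \<in> wspace (\<lambda>x. hw_weight x + \<mu> x)"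
  unfolding weight_space_def
proof (intro CollectI conjI ballI)
  fix x assume x: "x \<in> h1"
  have "act x (\<lambda>_. 0) (lp_act y a v0) = lp_act y a (act x (\<lambda>_. 0) v0) + lp_act (br x y) a v0"
    using lp_act_commutator[OF _ y(1) expo_zero a] x by simp
  also have "\<dots> = sv (hw_weight x + \<mu> x) (lp_act y a v0)"
    using x y a hw(3) expo_zero
    by (simp add: hw_weight_h1 root_space_def lp_act_scale lp_act_scale_elem V.scale_left_distrib)
  finally show "act x (\<lambda>_. 0) (lp_act y a v0) = sv (hw_weight x + \<mu> x) (lp_act y a v0)" .
next
  fix x assume x: "x \<in> h2"
  have "actd x (lp_act y a v0) = lp_act y a (actd x v0) + lp_act (br x y) a v0"
    by (rule lp_actd_commutator[OF x y(1) a])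
  also have "\<dots> = sv (hw_weight x + \<mu> x) (lp_act y a v0)"
    using x y a hw(4) h2_cartan[OF x]
    by (simp add: hw_weight_def root_space_def lp_act_scale lp_act_scale_elem V.scale_left_distrib)
  finally show "actd x (lp_act y a v0) = sv (hw_weight x + \<mu> x) (lp_act y a v0)" .
qed

lemma act_br_cartan_f:
  assumes "x \<in> hh" "j < l" "m \<in> expo n"
  shows "act (br x (f j)) m u = sv (- al j x) (act (f j) m u)"
  unfolding br_cartan_f[OF assms(1,2)] by (rule act_scale_elem[OF f_in_derived[OF assms(2)] assms(3)])

lemma act_f_wspace:
  assumes u: "u \<in> wspace \<mu>" and j: "j < l" and m: "m \<in> expo n"
  shows "act (f j) m u \<in> wspace (\<lambda>x. \<mu> x - al j x)"
  unfolding weight_space_def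
proof (intro CollectI conjI ballI)
  fix x assume x: "x \<in> h1"
  have "act x (\<lambda>_. 0) (act (f j) m u) = act (f j) m (act x (\<lambda>_. 0) u) + act (br x (f j)) m u"
    using act_commutator[OF _ f_in_derived[OF j] expo_zero m] x by simp
  then show "act x (\<lambda>_. 0) (act (f j) m u) = sv (\<mu> x - al j x) (act (f j) m u)"
    using u x j m f_in_derived[OF j]
    by (simp add: weight_space_def act_br_cartan_f act_scale V.scale_left_diff_distrib)
next
  fix x assume x: "x \<in> h2"
  have "actd x (act (f j) m u) = act (f j) m (actd x u) + act (br x (f j)) m u"
    by (rule actd_commutator[OF x f_in_derived[OF j] m])
  then show "actd x (act (f j) m u) = sv (\<mu> x - al j x) (act (f j) m u)"
    using u x j m f_in_derived[OF j] h2_cartan[OF x]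
    by (simp add: weight_space_def act_br_cartan_f act_scale V.scale_left_diff_distrib)
qed

lemma lp_act_f_wspace:
  "u \<in> wspace \<mu> \<Longrightarrow> j < l \<Longrightarrow> a \<in> laurent n \<Longrightarrow> lp_act (f j) a u \<in> wspace (\<lambda>x. \<mu> x - al j x)"
  unfolding lp_act_def
  by (rule V.lincomb_in_subspace[OF subspace_wspace]) (simp add: act_f_wspace laurent_expo)

text \<open>Weights are only tested on \<open>h1 \<union> h2\<close>; it spans \<open>hh\<close> by the choice of the complement \<open>h2\<close>.\<close>
lemma root_comb_separated:
  assumes "\<exists>i<l. c i \<noteq> 0"
  shows "\<exists>x\<in>h1 \<union> h2. (\<Sum>i<l. c i * al i x) \<noteq> 0"
proof (rule ccontr)
  assume contra: "\<not> ?thesis"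
  have "(\<Sum>i<l. c i * al i y) = 0" if y: "y \<in> hh" for y
  proof -
    obtain a b where ab: "a \<in> h1" "b \<in> h2" "y = a + b" using h2_compl(2) y by blast
    have "al i (a + b) = al i a + al i b" if "i < l" for i
      using simple_root_add[OF that] ab h2_cartan by simp
    then have "(\<Sum>i<l. c i * al i y) = (\<Sum>i<l. c i * al i a) + (\<Sum>i<l. c i * al i b)"
      unfolding ab(3) sum.distrib[symmetric] by (intro sum.cong) (simp_all add: distrib_left)
    also have "\<dots> = 0" using contra ab(1,2) by auto
    finally show ?thesis .
  qed
  moreover obtain i where "i < l" "c i \<noteq> 0" using assms by blast
  ultimately show False using simple_roots_independent[of c i] by blast
qed

lemma simple_roots_separated:
  assumes "i < l" "j < l" "i \<noteq> j"
  shows "\<exists>x\<in>h1 \<union> h2. al j x \<noteq> al i x"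
proof -
  let ?c = "\<lambda>k. if k = j then 1 else if k = i then -1 else (0::complex)"
  have "\<exists>k<l. ?c k \<noteq> 0" using assms by (intro exI[of _ j]) auto
  from root_comb_separated[OF this] obtain x
    where x: "x \<in> h1 \<union> h2" "(\<Sum>k<l. ?c k * al k x) \<noteq> 0"
    by blast
  have "?c k * al k x = (if k = j then al k x else 0) - (if k = i then al k x else 0)" for k
    using assms(3) by auto
  then have "(\<Sum>k<l. ?c k * al k x) = al j x - al i x"
    using assms(1,2) by (simp only: sum_subtractf sum.delta) simp
  then show ?thesis using x by auto
qed

definition cartan_act :: "'g \<Rightarrow> 'v \<Rightarrow> 'v" where
  "cartan_act x = (if x \<in> h2 then actd x else act x (\<lambda>_. 0))"

lemma cartan_act_wspace: "u \<in> wspace \<mu> \<Longrightarrow> x \<in> h1 \<union> h2 \<Longrightarrow> cartan_act x u = sv (\<mu> x) u"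
  unfolding cartan_act_def weight_space_def by auto

lemma cartan_act_add: "x \<in> h1 \<union> h2 \<Longrightarrow> cartan_act x (u + w) = cartan_act x u + cartan_act x w"
  using expo_zero by (auto simp: cartan_act_def act_add actd_add)

lemma cartan_act_scale: "x \<in> h1 \<union> h2 \<Longrightarrow> cartan_act x (sv c u) = sv c (cartan_act x u)"
  using expo_zero by (auto simp: cartan_act_def act_scale actd_scale)

lemma wspace_component_eq_0:
  assumes "w0 \<in> wspace \<nu>" "finite S"
    and "\<And>j. j \<in> S \<Longrightarrow> g j \<in> wspace (\<mu> j)"
    and "\<And>j. j \<in> S \<Longrightarrow> \<exists>x\<in>h1 \<union> h2. \<mu> j x \<noteq> \<nu> x"
    and "w0 + sum g S = 0"
  shows "w0 = 0"
  by (rule V.weight_component_eq_0[where T=cartan_act and H="h1 \<union> h2", OF cartan_act_add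
        cartan_act_scale assms(2) cartan_act_wspace[OF assms(1)] cartan_act_wspace[OF assms(3)] assms(4,5)])

lemma wspace_component_eq_0_list:
  assumes "w0 \<in> wspace \<nu>"
    and "\<And>p. p \<in> set L \<Longrightarrow> snd p \<in> wspace (fst p)"
    and "\<And>p. p \<in> set L \<Longrightarrow> \<exists>x\<in>h1 \<union> h2. fst p x \<noteq> \<nu> x"
    and "w0 + sum_list (map snd L) = 0"
  shows "w0 = 0"
  by (rule V.weight_component_eq_0_list[where T=cartan_act and H="h1 \<union> h2", OF cartan_act_add
        cartan_act_scale cartan_act_wspace[OF assms(1)] cartan_act_wspace[OF assms(2)] assms(3,4)])

section \<open>Finite-dimensional weight spaces give a cofinite ideal\<close>

text \<open>\<open>psi_lp x a\<close> is \<open>\<psi>(x \<otimes> a)\<close>.\<close>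
definition psi_lp :: "'g \<Rightarrow> ((nat \<Rightarrow> int) \<Rightarrow> complex) \<Rightarrow> complex" where
  "psi_lp x a = lincomb (*) a (psi1 x)"

lemma lp_act_h1_v0: "x \<in> h1 \<Longrightarrow> a \<in> laurent n \<Longrightarrow> lp_act x a v0 = sv (psi_lp x a) v0"
  unfolding lp_act_def psi_lp_def
  by (subst lincomb_cong[where H="\<lambda>m. sv (psi1 x m) v0"])
    (simp_all add: hw(3) laurent_expo lincomb_def V.scale_sum_left)

lemma psi_lp_add: "x \<in> h1 \<Longrightarrow> y \<in> h1 \<Longrightarrow> a \<in> laurent n \<Longrightarrow> psi_lp (x + y) a = psi_lp x a + psi_lp y a"
  unfolding psi_lp_def complex_mult.lincomb_add[symmetric]
  by (rule lincomb_cong) (simp add: psi1_add laurent_expo)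

lemma psi_lp_scale: "x \<in> h1 \<Longrightarrow> a \<in> laurent n \<Longrightarrow> psi_lp (sc c x) a = c * psi_lp x a"
  unfolding psi_lp_def complex_mult.lincomb_scale[symmetric]
  by (rule lincomb_cong) (simp add: psi1_scale laurent_expo)

lemma psi_lp_eq_0_if_coroots:
  assumes a: "a \<in> laurent n" and coroots: "\<And>i. i < l \<Longrightarrow> psi_lp (cr i) a = 0" and x: "x \<in> h1"
  shows "psi_lp x a = 0"
proof -
  have "x \<in> coroot_span" using x h1_eq_coroot_span by simp
  then have "x \<in> h1 \<and> psi_lp x a = 0"
  proof (rule G.span_induct)
    show "G.subspace {x. x \<in> h1 \<and> psi_lp x a = 0}"
      unfolding G.subspace_def
      using G.subspace_0[OF subspace_h1] psi_lp_scale[of 0 a 0] a subspace_cartan subspace_derived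
      by (auto intro: G.subspace_add G.subspace_scale simp: psi_lp_add psi_lp_scale)
  qed (use coroots coroot_in_h1 in auto)
  then show ?thesis by blast
qed

text \<open>The largest ideal \<open>J\<close> of \<open>A\<close> with \<open>\<psi>(h' \<otimes> J) = 0\<close>.\<close>
definition psi_radical :: "((nat \<Rightarrow> int) \<Rightarrow> complex) set" where
  "psi_radical = {a \<in> laurent n. \<forall>i<l. \<forall>m\<in>expo n. psi_lp (cr i) (shift m a) = 0}"

lemma psi_radical_annihilates: "x \<in> h1 \<Longrightarrow> a \<in> psi_radical \<Longrightarrow> psi_lp x a = 0"
  using psi_lp_eq_0_if_coroots[of a x] expo_zero shift_zero[of a] by (force simp: psi_radical_def)

lemma laurent_ideal_psi_radical: "laurent_ideal n psi_radical"
  unfolding laurent_ideal_def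
proof (intro conjI ballI)
  show "psi_radical \<subseteq> laurent n" by (auto simp: psi_radical_def)
  have "shift m (\<lambda>_. 0) = (\<lambda>_. 0)" for m by (simp add: shift_def)
  then show "(\<lambda>_. 0) \<in> psi_radical" by (simp add: psi_radical_def laurent_def psi_lp_def)
next
  fix a b assume a: "a \<in> psi_radical" and b: "b \<in> psi_radical"
  have "psi_lp (cr i) (shift m (\<lambda>m. a m + b m)) = 0" if "i < l" "m \<in> expo n" for i m
  proof -
    have "shift m (\<lambda>m. a m + b m) = (\<lambda>j. shift m a j + shift m b j)" by (simp add: shift_def)
    moreover have "a \<in> laurent n" "b \<in> laurent n" using a b by (auto simp: psi_radical_def)
    then have "finite {j. shift m a j \<noteq> 0}" "finite {j. shift m b j \<noteq> 0}"
      using laurent_finite[OF laurent_shift[OF _ that(2)]] by auto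
    ultimately show ?thesis
      using a b that by (simp add: psi_lp_def complex_mult.lincomb_add_coeffs psi_radical_def)
  qed
  then show "(\<lambda>m. a m + b m) \<in> psi_radical" using a b laurent_add by (simp add: psi_radical_def)
next
  fix c b assume c: "c \<in> laurent n" and b: "b \<in> psi_radical"
  have bl: "b \<in> laurent n" using b by (simp add: psi_radical_def)
  have "psi_lp (cr i) (shift m (lmult c b)) = 0" if "i < l" "m \<in> expo n" for i m
  proof -
    let ?K = "{k. c k \<noteq> 0}"
    have mk: "(\<lambda>i. m i + k i) \<in> expo n" if "k \<in> ?K" for k
      using laurent_expo[OF c] that \<open>m \<in> expo n\<close> expo_add by auto
    have "psi_lp (cr i) (shift m (lmult c b))
        = (\<Sum>k\<in>?K. lincomb (*) (\<lambda>j. c k * shift (\<lambda>i. m i + k i) b j) (psi1 (cr i)))"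
      unfolding psi_lp_def shift_lmult
      by (rule complex_mult.lincomb_sum_coeffs)
        (use laurent_finite[OF c] laurent_finite[OF laurent_shift[OF bl mk]] in auto)
    also have "\<dots> = (\<Sum>k\<in>?K. c k * psi_lp (cr i) (shift (\<lambda>i. m i + k i) b))"
      by (simp add: complex_mult.lincomb_scale_coeffs psi_lp_def)
    also have "\<dots> = 0" using b that mk by (simp add: psi_radical_def)
    finally show ?thesis .
  qed
  then show "lmult c b \<in> psi_radical" using laurent_lmult[OF c bl] by (simp add: psi_radical_def)
qed

lemma f_v0_eq_0_imp_psi_radical:
  assumes a: "a \<in> laurent n" and f0: "\<And>i. i < l \<Longrightarrow> lp_act (f i) a v0 = 0"
  shows "a \<in> psi_radical"
proof -
  have "psi_lp (cr i) (shift m a) = 0" if i: "i < l" and m: "m \<in> expo n" for i m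
  proof -
    have "0 = act (e i) m (lp_act (f i) a v0)" using f0[OF i] e_in_derived[OF i] m by simp
    also have "\<dots> = lp_act (f i) a (act (e i) m v0) + lp_act (br (e i) (f i)) (shift m a) v0"
      by (rule lp_act_commutator[OF e_in_derived[OF i] f_in_derived[OF i] m a])
    also have "\<dots> = sv (psi_lp (cr i) (shift m a)) v0"
      using act_e_v0[OF i m] lp_act_zero[OF f_in_derived[OF i] a] br_e_f[OF i i]
        lp_act_h1_v0[OF coroot_in_h1[OF i] laurent_shift[OF a m]]
      by simp
    finally show ?thesis using hw(1) by simp
  qed
  then show ?thesis using a by (simp add: psi_radical_def)
qed

lemma f_v0_wspace:
  assumes "j < l" "a \<in> laurent n"
  shows "lp_act (f j) a v0 \<in> wspace (\<lambda>x. hw_weight x - al j x)"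
  using lp_act_v0_wspace[OF f_in_derived[OF assms(1)] _ assms(2), of "\<lambda>x. - al j x"] assms(1)
  by (simp add: root_space_def br_cartan_f)

text \<open>The summands lie in the pairwise distinct weight spaces of weights \<open>\<lambda> - \<alpha>\<^sub>i\<close>.\<close>
lemma sum_f_v0_eq_0_imp_psi_radical:
  assumes a: "a \<in> laurent n" and sum0: "(\<Sum>i<l. lp_act (f i) a v0) = 0"
  shows "a \<in> psi_radical"
proof (rule f_v0_eq_0_imp_psi_radical[OF a])
  fix i assume i: "i < l"
  let ?wt = "\<lambda>j x. hw_weight x - al j x"
  show "lp_act (f i) a v0 = 0"
  proof (rule wspace_component_eq_0[OF f_v0_wspace[OF i a], where S="{..<l} - {i}"])
    show "\<exists>x\<in>h1 \<union> h2. ?wt j x \<noteq> ?wt i x" if "j \<in> {..<l} - {i}" for j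
      using simple_roots_separated[of i j] that i by auto
    show "lp_act (f i) a v0 + (\<Sum>j\<in>{..<l} - {i}. lp_act (f j) a v0) = 0"
      using sum0 i by (simp add: sum.remove)
  qed (use f_v0_wspace a in auto)
qed

lemma cofinite_ideal_psi_radical:
  assumes fin: "\<forall>\<mu>. fin_dim sv (wspace \<mu>)"
  shows "cofinite_ideal n psi_radical"
proof -
  let ?wt = "\<lambda>i x. hw_weight x - al i x"
  have "\<forall>i. \<exists>B. finite B \<and> (\<forall>w\<in>wspace (?wt i). in_fspan sv B w)"
    using fin unfolding fin_dim_def by blast
  then obtain Bf where "\<forall>i. finite (Bf i) \<and> (\<forall>w\<in>wspace (?wt i). in_fspan sv (Bf i) w)"
    by (rule choice[THEN exE])
  then have Bf: "\<And>i. finite (Bf i)" "\<And>i w. w \<in> wspace (?wt i) \<Longrightarrow> in_fspan sv (Bf i) w"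
    by auto
  let ?G = "\<lambda>m. \<Sum>i<l. act (f i) m v0"
  have lincomb_G: "lincomb sv a ?G = (\<Sum>i<l. lp_act (f i) a v0)" for a
    unfolding lp_act_def by (rule V.lincomb_sum) simp
  have img: "lincomb sv a ?G \<in> V.span (\<Union>i<l. Bf i)" if a: "a \<in> laurent n" for a
    unfolding lincomb_G
  proof (rule V.span_sum)
    fix i assume "i \<in> {..<l}"
    then have "lp_act (f i) a v0 \<in> V.span (Bf i)"
      using f_v0_wspace a by (intro in_fspan_imp_span[OF V.vector_space_axioms] Bf(2)) simp
    moreover have "V.span (Bf i) \<subseteq> V.span (\<Union>i<l. Bf i)"
      using \<open>i \<in> {..<l}\<close> by (intro V.span_mono) auto
    ultimately show "lp_act (f i) a v0 \<in> V.span (\<Union>i<l. Bf i)" by blast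
  qed
  then obtain B where B: "finite B" "B \<subseteq> laurent n"
    "\<forall>a\<in>laurent n. \<exists>c. lincomb sv (\<lambda>m. a m - (\<Sum>b\<in>B. c b * b m)) ?G = 0"
    using finite_image_cofinite_kernel[where n=n, OF V.vector_space_axioms _ img] Bf(1) by auto
  show ?thesis
    unfolding cofinite_ideal_def
  proof (intro conjI exI[of _ B] ballI laurent_ideal_psi_radical)
    fix a assume a: "a \<in> laurent n"
    then obtain c where "lincomb sv (\<lambda>m. a m - (\<Sum>b\<in>B. c b * b m)) ?G = 0" using B(3) by blast
    then have "(\<lambda>m. a m - (\<Sum>b\<in>B. c b * b m)) \<in> psi_radical"
      by (intro sum_f_v0_eq_0_imp_psi_radical laurent_diff_lincomb[OF a B(1,2)])
        (simp add: lincomb_G)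
    then show "\<exists>c. (\<lambda>m. a m - (\<Sum>b\<in>B. c b * b m)) \<in> psi_radical" by blast
  qed (use B in auto)
qed

section \<open>A cofinite ideal gives finite-dimensional weight spaces\<close>

text \<open>\<open>lower_span U = U(N\<^sup>- \<otimes> A) U\<close>; the generators \<open>f\<^sub>j \<otimes> t\<^sup>m\<close> suffice.\<close>
inductive_set lower_span :: "'v set \<Rightarrow> 'v set" for U where
  base: "u \<in> U \<Longrightarrow> u \<in> lower_span U"
| zero: "0 \<in> lower_span U"
| add: "u \<in> lower_span U \<Longrightarrow> w \<in> lower_span U \<Longrightarrow> u + w \<in> lower_span U"
| scale: "u \<in> lower_span U \<Longrightarrow> sv c u \<in> lower_span U"
| f: "u \<in> lower_span U \<Longrightarrow> j < l \<Longrightarrow> m \<in> expo n \<Longrightarrow> act (f j) m u \<in> lower_span U"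

lemma subspace_lower_span: "V.subspace (lower_span U)"
  unfolding V.subspace_def by (auto intro: lower_span.intros)

definition lower_stable :: "'v set \<Rightarrow> bool" where
  "lower_stable U \<longleftrightarrow> (\<forall>u\<in>U. \<forall>x\<in>h1. \<forall>m\<in>expo n. act x m u \<in> lower_span U)
     \<and> (\<forall>u\<in>U. \<forall>x\<in>h2. actd x u \<in> lower_span U)
     \<and> (\<forall>u\<in>U. \<forall>i<l. \<forall>m\<in>expo n. act (e i) m u \<in> lower_span U)"

lemma lower_span_act_h1:
  assumes U: "lower_stable U" and x: "x \<in> h1"
  shows "v \<in> lower_span U \<Longrightarrow> m \<in> expo n \<Longrightarrow> act x m v \<in> lower_span U"
proof (induction v arbitrary: m rule: lower_span.induct)
  case (f u j k)
  have mk: "(\<lambda>i. m i + k i) \<in> expo n" using f expo_add by blast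
  have "act x m (act (f j) k u) = act (f j) k (act x m u) + act (br x (f j)) (\<lambda>i. m i + k i) u"
    using x f by (intro act_commutator f_in_derived) auto
  also have "\<dots> = act (f j) k (act x m u) + sv (- al j x) (act (f j) (\<lambda>i. m i + k i) u)"
    using x f mk by (simp add: act_br_cartan_f)
  finally show ?case
    using f mk by (simp add: V.subspace_diff[OF subspace_lower_span] lower_span.intros)
qed (use U x in \<open>auto simp: lower_stable_def act_add act_scale intro: lower_span.intros\<close>)

lemma lower_span_actd:
  assumes U: "lower_stable U" and x: "x \<in> h2"
  shows "v \<in> lower_span U \<Longrightarrow> actd x v \<in> lower_span U"
proof (induction v rule: lower_span.induct)
  case (f u j k)
  have "actd x (act (f j) k u) = act (f j) k (actd x u) + sv (- al j x) (act (f j) k u)"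
    using actd_commutator[OF x f_in_derived] act_br_cartan_f[OF h2_cartan[OF x]] f by simp
  then show ?case using f by (simp add: V.subspace_diff[OF subspace_lower_span] lower_span.intros)
qed (use U x in \<open>auto simp: lower_stable_def actd_add actd_scale intro: lower_span.intros\<close>)

lemma lower_span_act_e:
  assumes U: "lower_stable U" and i: "i < l"
  shows "v \<in> lower_span U \<Longrightarrow> m \<in> expo n \<Longrightarrow> act (e i) m v \<in> lower_span U"
proof (induction v arbitrary: m rule: lower_span.induct)
  case (f u j k)
  have mk: "(\<lambda>i. m i + k i) \<in> expo n" using f expo_add by blast
  have "act (e i) m (act (f j) k u) = act (f j) k (act (e i) m u) + act (br (e i) (f j)) (\<lambda>i. m i + k i) u"
    using i f by (intro act_commutator e_in_derived f_in_derived) auto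
  moreover have "act (br (e i) (f j)) (\<lambda>i. m i + k i) u \<in> lower_span U"
    using lower_span_act_h1[OF U coroot_in_h1[OF i] f(1) mk] br_e_f[OF i f(2)] mk
    by (auto intro: lower_span.zero)
  ultimately show ?case using f by (simp add: lower_span.intros)
qed (use U i e_in_derived in \<open>auto simp: lower_stable_def act_add act_scale intro: lower_span.intros\<close>)

lemma ad_closure_act_lower_span:
  assumes gen: "\<And>i. i < l \<Longrightarrow> gen i \<in> G'"
    and gen_act: "\<And>i m v. i < l \<Longrightarrow> m \<in> expo n \<Longrightarrow> v \<in> lower_span U \<Longrightarrow> act (gen i) m v \<in> lower_span U"
  shows "X \<in> ad_closure gen \<Longrightarrow> m \<in> expo n \<Longrightarrow> v \<in> lower_span U \<Longrightarrow> act X m v \<in> lower_span U"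
proof (induction X arbitrary: m v rule: ad_closure.induct)
  case (add x y)
  then show ?case using ad_closure_derived[OF gen] by (simp add: act_add_elem lower_span.intros)
next
  case (scale x c)
  then show ?case using ad_closure_derived[OF gen] by (simp add: act_scale_elem lower_span.intros)
next
  case (br i x)
  have "act (gen i) (\<lambda>_. 0) (act x m v) = act x m (act (gen i) (\<lambda>_. 0) v) + act (br (gen i) x) m v"
    using act_commutator[OF gen[OF br(1)] ad_closure_derived[OF gen br(2)] expo_zero br(4)] by simp
  then have "act (br (gen i) x) m v = act (gen i) (\<lambda>_. 0) (act x m v) - act x m (act (gen i) (\<lambda>_. 0) v)"
    by (simp add: eq_diff_eq add.commute)
  then show ?case
    using br gen_act expo_zero by (simp add: V.subspace_diff[OF subspace_lower_span])
qed (use gen_act in \<open>auto intro: lower_span.zero\<close>)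

lemma lower_span_act_derived:
  assumes U: "lower_stable U" and X: "X \<in> G'" and m: "m \<in> expo n" and v: "v \<in> lower_span U"
  shows "act X m v \<in> lower_span U"
proof -
  from X derived_subset_triangular obtain a c b
    where abc: "a \<in> Nneg" "c \<in> coroot_span" "b \<in> Npos" "X = a + c + b"
    by (auto elim!: set_plus_elim)
  have c: "c \<in> h1" using abc(2) h1_eq_coroot_span by simp
  have "act X m v = act a m v + act c m v + act b m v"
    using abc m c Nneg_derived Npos_derived G.subspace_add[OF subspace_derived]
    by (simp add: act_add_elem)
  moreover have "act a m v \<in> lower_span U"
    using ad_closure_act_lower_span[OF f_in_derived _ abc(1) m v] lower_span.f by blast
  moreover have "act c m v \<in> lower_span U" by (rule lower_span_act_h1[OF U c v m])
  moreover have "act b m v \<in> lower_span U"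
    using ad_closure_act_lower_span[OF e_in_derived _ abc(3) m v] lower_span_act_e[OF U] by blast
  ultimately show ?thesis by (simp add: lower_span.add)
qed

lemma lower_span_trivial: "lower_stable U \<Longrightarrow> lower_span U = {0} \<or> lower_span U = UNIV"
  by (rule irreducible[OF subspace_lower_span]) (simp_all add: lower_span_act_derived lower_span_actd)

lemma lower_span_v0: "lower_span {v0} = UNIV"
proof -
  have "lower_stable {v0}"
    unfolding lower_stable_def using hw(3,4) act_e_v0 by (auto intro: lower_span.intros)
  moreover have "v0 \<in> lower_span {v0}" by (simp add: lower_span.base)
  ultimately show ?thesis using lower_span_trivial hw(1) by blast
qed

definition lower_weight_sums :: "'v set" where
  "lower_weight_sums = {sum_list (map snd L) |L. \<forall>p\<in>set L. nontrivial (fst p) \<and>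
     snd p \<in> wspace (\<lambda>x. hw_weight x - root_lattice_elem (fst p) x)}"

lemma lower_weight_sums_add:
  "u \<in> lower_weight_sums \<Longrightarrow> w \<in> lower_weight_sums \<Longrightarrow> u + w \<in> lower_weight_sums"
proof -
  assume "u \<in> lower_weight_sums" "w \<in> lower_weight_sums"
  then obtain L L' where "u = sum_list (map snd L)" "w = sum_list (map snd L')"
    "\<forall>p\<in>set (L @ L'). nontrivial (fst p) \<and>
      snd p \<in> wspace (\<lambda>x. hw_weight x - root_lattice_elem (fst p) x)"
    unfolding lower_weight_sums_def by auto
  then show ?thesis unfolding lower_weight_sums_def by (intro CollectI exI[of _ "L @ L'"]) simp
qed

lemma lower_weight_sums_scale: "u \<in> lower_weight_sums \<Longrightarrow> sv c u \<in> lower_weight_sums"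
proof -
  assume "u \<in> lower_weight_sums"
  then obtain L where L: "u = sum_list (map snd L)" "\<forall>p\<in>set L. nontrivial (fst p) \<and>
      snd p \<in> wspace (\<lambda>x. hw_weight x - root_lattice_elem (fst p) x)"
    unfolding lower_weight_sums_def by blast
  have "sv c u = sum_list (map snd (map (\<lambda>p. (fst p, sv c (snd p))) L))"
    unfolding L(1) by (induction L) (simp_all add: V.scale_right_distrib)
  then show ?thesis
    unfolding lower_weight_sums_def using L(2) V.subspace_scale[OF subspace_wspace]
    by (intro CollectI exI[of _ "map (\<lambda>p. (fst p, sv c (snd p))) L"]) auto
qed

lemma lower_weight_sums_act_f:
  assumes u: "u \<in> lower_weight_sums" and j: "j < l" and m: "m \<in> expo n"
  shows "act (f j) m u \<in> lower_weight_sums"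
proof -
  obtain L where L: "u = sum_list (map snd L)" "\<forall>p\<in>set L. nontrivial (fst p) \<and>
      snd p \<in> wspace (\<lambda>x. hw_weight x - root_lattice_elem (fst p) x)"
    using u unfolding lower_weight_sums_def by blast
  let ?L = "map (\<lambda>p. (\<lambda>i. fst p i + unit_vec j i, act (f j) m (snd p))) L"
  have "act (f j) m u = sum_list (map snd ?L)"
    unfolding L(1) act_sum_list[OF f_in_derived[OF j] m] by (simp add: comp_def)
  moreover have "nontrivial (fst q) \<and>
      snd q \<in> wspace (\<lambda>x. hw_weight x - root_lattice_elem (fst q) x)" if "q \<in> set ?L" for q
  proof -
    from that obtain p where p: "p \<in> set L" "q = (\<lambda>i. fst p i + unit_vec j i, act (f j) m (snd p))"
      by auto
    have "act (f j) m (snd p) \<in> wspace (\<lambda>x. (hw_weight x - root_lattice_elem (fst p) x) - al j x)"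
      using act_f_wspace[OF _ j m] L(2) p(1) by blast
    then show ?thesis
      using p nontrivial_add_unit[OF j] by (simp add: root_lattice_elem_add_unit[OF j] diff_diff_eq)
  qed
  ultimately show ?thesis unfolding lower_weight_sums_def by blast
qed

lemma v0_notin_lower_weight_sums: "v0 \<notin> lower_weight_sums"
proof
  assume "v0 \<in> lower_weight_sums"
  then obtain L where L: "v0 = sum_list (map snd L)" "\<forall>p\<in>set L. nontrivial (fst p) \<and>
      snd p \<in> wspace (\<lambda>x. hw_weight x - root_lattice_elem (fst p) x)"
    unfolding lower_weight_sums_def by blast
  let ?L = "map (\<lambda>p. (\<lambda>x. hw_weight x - root_lattice_elem (fst p) x, - snd p)) L"
  have "v0 = 0"
  proof (rule wspace_component_eq_0_list[OF v0_in_wspace])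
    show "snd q \<in> wspace (fst q)" if "q \<in> set ?L" for q
      using that L(2) V.subspace_neg[OF subspace_wspace] by auto
    show "\<exists>x\<in>h1 \<union> h2. fst q x \<noteq> hw_weight x" if "q \<in> set ?L" for q
    proof -
      from that obtain p where p: "p \<in> set L" "q = (\<lambda>x. hw_weight x - root_lattice_elem (fst p) x, - snd p)"
        by auto
      have "\<exists>i<l. (of_nat (fst p i) :: complex) \<noteq> 0" using L(2) p(1) by (auto simp: nontrivial_def)
      from root_comb_separated[OF this] obtain x where "x \<in> h1 \<union> h2" "root_lattice_elem (fst p) x \<noteq> 0"
        by (auto simp: root_lattice_elem_def)
      then show ?thesis using p by auto
    qed
    show "v0 + sum_list (map snd ?L) = 0"
      using L(1) by (simp add: comp_def uminus_sum_list_map[of snd, unfolded comp_def, symmetric])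
  qed
  then show False using hw(1) by simp
qed

primrec f_word :: "(nat \<times> ((nat \<Rightarrow> int) \<Rightarrow> complex)) list \<Rightarrow> 'v" where
  "f_word [] = v0"
| "f_word (p # w) = lp_act (f (fst p)) (snd p) (f_word w)"

definition letter_count :: "(nat \<times> ((nat \<Rightarrow> int) \<Rightarrow> complex)) list \<Rightarrow> nat \<Rightarrow> nat" where
  "letter_count w i = count_list (map fst w) i"

lemma letter_count_Cons: "letter_count (p # w) = (\<lambda>i. letter_count w i + unit_vec (fst p) i)"
  by (simp add: fun_eq_iff letter_count_def unit_vec_def)

lemma f_word_wspace:
  "set w \<subseteq> {..<l} \<times> laurent n \<Longrightarrow>
    f_word w \<in> wspace (\<lambda>x. hw_weight x - root_lattice_elem (letter_count w) x)"
proof (induction w)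
  case Nil
  then show ?case using v0_in_wspace by (simp add: letter_count_def root_lattice_elem_def)
next
  case (Cons p w)
  then have "fst p < l" "snd p \<in> laurent n" by auto
  with Cons have "f_word (p # w) \<in>
      wspace (\<lambda>x. (hw_weight x - root_lattice_elem (letter_count w) x) - al (fst p) x)"
    by (simp add: lp_act_f_wspace)
  then show ?case
    using \<open>fst p < l\<close> by (simp add: letter_count_Cons root_lattice_elem_add_unit diff_diff_eq)
qed

lemma length_eq_sum_letter_count: "set (map fst w) \<subseteq> {..<l} \<Longrightarrow> length w = (\<Sum>i<l. letter_count w i)"
proof (induction w)
  case (Cons p w)
  then show ?case by (simp add: letter_count_Cons unit_vec_def sum.distrib)
qed (simp add: letter_count_def)

lemma length_eq_if_same_weight:
  assumes "set (map fst w) \<subseteq> {..<l}" "set (map fst w') \<subseteq> {..<l}"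
    and eq: "\<And>x. x \<in> h1 \<union> h2 \<Longrightarrow> root_lattice_elem (letter_count w) x = root_lattice_elem (letter_count w') x"
  shows "length w = length w'"
proof -
  let ?c = "\<lambda>i. (of_nat (letter_count w i) :: complex) - of_nat (letter_count w' i)"
  have "\<not> (\<exists>i<l. ?c i \<noteq> 0)"
  proof
    assume "\<exists>i<l. ?c i \<noteq> 0"
    from root_comb_separated[OF this] obtain x
      where "x \<in> h1 \<union> h2" "(\<Sum>i<l. ?c i * al i x) \<noteq> 0"
      by blast
    moreover have "(\<Sum>i<l. ?c i * al i x) =
        root_lattice_elem (letter_count w) x - root_lattice_elem (letter_count w') x"
      by (simp add: root_lattice_elem_def left_diff_distrib sum_subtractf)
    ultimately show False using eq by simp
  qed
  then have "(\<Sum>i<l. letter_count w i) = (\<Sum>i<l. letter_count w' i)" by simp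
  then show ?thesis using assms(1,2) by (simp add: length_eq_sum_letter_count)
qed

end

locale highest_weight_ideal =
  highest_weight_setting sc br l C hh al cr e f n h2 sv act actd psi1 psi2 v0
  for sc :: "complex \<Rightarrow> 'g::ab_group_add \<Rightarrow> 'g" and br l C hh al cr e f n h2
    and sv :: "complex \<Rightarrow> 'v::ab_group_add \<Rightarrow> 'v" and act actd psi1 psi2 v0 +
  fixes I :: "((nat \<Rightarrow> int) \<Rightarrow> complex) set"
  assumes ideal: "laurent_ideal n I"
    and psi_vanishes: "\<forall>x\<in>hh \<inter> derived sc br. \<forall>a\<in>I. psi_lp x a = 0"
begin

lemma ideal_laurent: "a \<in> I \<Longrightarrow> a \<in> laurent n"
  using ideal by (auto simp: laurent_ideal_def)

lemma ideal_shift: "a \<in> I \<Longrightarrow> m \<in> expo n \<Longrightarrow> shift m a \<in> I"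
  using ideal laurent_monom by (auto simp: laurent_ideal_def shift_eq_lmult)

definition ideal_vectors :: "'v set" where
  "ideal_vectors = {lp_act Y a v0 |Y a. Y \<in> Nneg \<and> a \<in> I}"

lemma ideal_vector_in_lower_span: "Y \<in> Nneg \<Longrightarrow> a \<in> I \<Longrightarrow> lp_act Y a v0 \<in> lower_span ideal_vectors"
  by (rule lower_span.base) (auto simp: ideal_vectors_def)

lemma act_h1_ideal_vector:
  assumes Y: "Y \<in> Nneg" and a: "a \<in> I" and x: "x \<in> h1" and m: "m \<in> expo n"
  shows "act x m (lp_act Y a v0) \<in> lower_span ideal_vectors"
proof -
  have "act x m (lp_act Y a v0) = lp_act Y a (act x m v0) + lp_act (br x Y) (shift m a) v0"
    by (rule lp_act_commutator[OF _ Nneg_derived[OF Y] m ideal_laurent[OF a]]) (use x in simp)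
  also have "\<dots> = sv (psi1 x m) (lp_act Y a v0) + lp_act (br x Y) (shift m a) v0"
    using hw(3) x m Y a by (simp add: lp_act_scale Nneg_derived ideal_laurent)
  finally show ?thesis
    using ideal_vector_in_lower_span[OF br_cartan_Nneg[OF _ Y] ideal_shift[OF a m]] x
      ideal_vector_in_lower_span[OF Y a]
    by (simp add: lower_span.intros)
qed

lemma actd_ideal_vector:
  assumes Y: "Y \<in> Nneg" and a: "a \<in> I" and x: "x \<in> h2"
  shows "actd x (lp_act Y a v0) \<in> lower_span ideal_vectors"
proof -
  have "actd x (lp_act Y a v0) = lp_act Y a (actd x v0) + lp_act (br x Y) a v0"
    by (rule lp_actd_commutator[OF x Nneg_derived[OF Y] ideal_laurent[OF a]])
  also have "\<dots> = sv (psi2 x) (lp_act Y a v0) + lp_act (br x Y) a v0"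
    using hw(4) x Y a by (simp add: lp_act_scale Nneg_derived ideal_laurent)
  finally show ?thesis
    using ideal_vector_in_lower_span[OF br_cartan_Nneg[OF h2_cartan[OF x] Y] a]
      ideal_vector_in_lower_span[OF Y a]
    by (simp add: lower_span.intros)
qed

text \<open>\<open>[e\<^sub>i, Y]\<close> lies in \<open>Nneg + h1\<close>, and the \<open>h1\<close>-part acts on \<open>v\<^sub>0\<close> through \<open>\<psi>\<close>,
  which vanishes on \<open>h1 \<otimes> I\<close>.\<close>
lemma act_e_ideal_vector:
  assumes Y: "Y \<in> Nneg" and a: "a \<in> I" and i: "i < l" and m: "m \<in> expo n"
  shows "act (e i) m (lp_act Y a v0) \<in> lower_span ideal_vectors"
proof -
  have sa: "shift m a \<in> I" using a m by (rule ideal_shift)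
  have "act (e i) m (lp_act Y a v0)
      = lp_act Y a (act (e i) m v0) + lp_act (br (e i) Y) (shift m a) v0"
    by (rule lp_act_commutator[OF e_in_derived[OF i] Nneg_derived[OF Y] m ideal_laurent[OF a]])
  then have eq: "act (e i) m (lp_act Y a v0) = lp_act (br (e i) Y) (shift m a) v0"
    using act_e_v0[OF i m] lp_act_zero[OF Nneg_derived[OF Y] ideal_laurent[OF a]] by simp
  from br_e_Nneg[OF i Y] obtain y c where yc: "y \<in> Nneg" "c \<in> coroot_span" "br (e i) Y = y + c"
    by (auto elim: set_plus_elim)
  have c: "c \<in> h1" using yc(2) h1_eq_coroot_span by simp
  have "lp_act (br (e i) Y) (shift m a) v0 = lp_act y (shift m a) v0 + lp_act c (shift m a) v0"
    unfolding yc(3) using c by (intro lp_act_add_elem Nneg_derived[OF yc(1)] ideal_laurent[OF sa]) simp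
  also have "lp_act c (shift m a) v0 = 0"
    using lp_act_h1_v0[OF c ideal_laurent[OF sa]] psi_vanishes c sa by simp
  finally show ?thesis
    unfolding eq using ideal_vector_in_lower_span[OF yc(1) sa] by simp
qed

lemma lower_stable_ideal_vectors: "lower_stable ideal_vectors"
proof -
  have "u \<in> ideal_vectors \<longleftrightarrow> (\<exists>Y a. Y \<in> Nneg \<and> a \<in> I \<and> u = lp_act Y a v0)" for u
    by (auto simp: ideal_vectors_def)
  then show ?thesis
    unfolding lower_stable_def using act_h1_ideal_vector actd_ideal_vector act_e_ideal_vector by auto
qed

lemma lower_span_ideal_vectors: "v \<in> lower_span ideal_vectors \<Longrightarrow> v \<in> lower_weight_sums"
proof (induction v rule: lower_span.induct)
  case (base u)
  then obtain Y a where Ya: "Y \<in> Nneg" "a \<in> I" "u = lp_act Y a v0" unfolding ideal_vectors_def by blast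
  from Nneg_root_vector_sums[OF Ya(1)] obtain ys where ys: "Y = sum_list (map snd ys)"
    "\<forall>p\<in>set ys. nontrivial (fst p) \<and> snd p \<in> root_space sc br hh (\<lambda>y. - root_lattice_elem (fst p) y)"
    unfolding root_vector_sums_def by auto
  have ys_derived: "snd p \<in> G'" if "p \<in> set ys" for p
    using ys(2) that root_vector_in_derived[of "fst p" "-1"] by simp
  let ?L = "map (\<lambda>p. (fst p, lp_act (snd p) a v0)) ys"
  have "u = sum_list (map snd ?L)"
    unfolding Ya(3) ys(1) by (subst lp_act_sum_list_elem[OF ys_derived ideal_laurent[OF Ya(2)]])
      (simp_all add: comp_def)
  moreover have "nontrivial (fst q) \<and>
      snd q \<in> wspace (\<lambda>x. hw_weight x - root_lattice_elem (fst q) x)" if "q \<in> set ?L" for q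
  proof -
    from that obtain p where p: "p \<in> set ys" "q = (fst p, lp_act (snd p) a v0)" by auto
    have "lp_act (snd p) a v0 \<in> wspace (\<lambda>x. hw_weight x + - root_lattice_elem (fst p) x)"
      using lp_act_v0_wspace[OF ys_derived[OF p(1)] _ ideal_laurent[OF Ya(2)]] ys(2) p(1) by blast
    then show ?thesis using p ys(2) by simp
  qed
  ultimately show ?case unfolding lower_weight_sums_def by blast
next
  case zero
  show ?case unfolding lower_weight_sums_def by (intro CollectI exI[of _ "[]"]) simp
qed (simp_all add: lower_weight_sums_add lower_weight_sums_scale lower_weight_sums_act_f)

text \<open>The submodule generated by \<open>(N\<^sup>- \<otimes> I) v\<^sub>0\<close> has no component of weight \<open>\<lambda>\<close>,
  so it is proper and hence zero.\<close>
lemma Nneg_ideal_kills_v0: "Y \<in> Nneg \<Longrightarrow> a \<in> I \<Longrightarrow> lp_act Y a v0 = 0"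
proof -
  assume "Y \<in> Nneg" "a \<in> I"
  have "lower_span ideal_vectors \<noteq> UNIV"
    using lower_span_ideal_vectors v0_notin_lower_weight_sums by blast
  then have "lower_span ideal_vectors = {0}"
    using lower_span_trivial[OF lower_stable_ideal_vectors] by blast
  then show ?thesis using ideal_vector_in_lower_span[OF \<open>Y \<in> Nneg\<close> \<open>a \<in> I\<close>] by blast
qed

lemma Nneg_ideal_annihilates: "Y \<in> Nneg \<Longrightarrow> a \<in> I \<Longrightarrow> lp_act Y a u = 0"
proof -
  have "u \<in> lower_span {v0}" using lower_span_v0 by simp
  then show "Y \<in> Nneg \<Longrightarrow> a \<in> I \<Longrightarrow> lp_act Y a u = 0"
  proof (induction u arbitrary: Y a rule: lower_span.induct)
    case (f u j m)
    have "act (f j) m (lp_act Y a u) = lp_act Y a (act (f j) m u) + lp_act (br (f j) Y) (shift m a) u"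
      using f by (intro lp_act_commutator f_in_derived Nneg_derived ideal_laurent)
    moreover have "br (f j) Y \<in> Nneg" using f by (intro br_ad_closure ad_closure.gen)
    ultimately show ?case using f ideal_shift f_in_derived by simp
  qed (simp_all add: Nneg_ideal_kills_v0 lp_act_zero lp_act_add lp_act_scale Nneg_derived ideal_laurent)
qed

end

locale highest_weight_cofinite =
  highest_weight_ideal sc br l C hh al cr e f n h2 sv act actd psi1 psi2 v0 I
  for sc :: "complex \<Rightarrow> 'g::ab_group_add \<Rightarrow> 'g" and br l C hh al cr e f n h2
    and sv :: "complex \<Rightarrow> 'v::ab_group_add \<Rightarrow> 'v" and act actd psi1 psi2 v0 I +
  fixes B :: "((nat \<Rightarrow> int) \<Rightarrow> complex) set"
  assumes B: "finite B" "B \<subseteq> laurent n"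
    and B_spans: "\<forall>a\<in>laurent n. \<exists>c. (\<lambda>m. a m - (\<Sum>b\<in>B. c b * b m)) \<in> I"
begin

abbreviation words :: "(nat \<times> ((nat \<Rightarrow> int) \<Rightarrow> complex)) list set" where
  "words \<equiv> {w. set w \<subseteq> {..<l} \<times> B}"

lemma act_f_reduce:
  assumes j: "j < l" and m: "m \<in> expo n"
  shows "\<exists>c. \<forall>u. act (f j) m u = (\<Sum>b\<in>B. sv (c b) (lp_act (f j) b u))"
proof -
  obtain c where c: "(\<lambda>k. monom m k - (\<Sum>b\<in>B. c b * b k)) \<in> I"
    using B_spans laurent_monom[OF m] by blast
  have "act (f j) m u = (\<Sum>b\<in>B. sv (c b) (lp_act (f j) b u))" for u
  proof -
    have "0 = lp_act (f j) (\<lambda>k. monom m k - (\<Sum>b\<in>B. c b * b k)) u"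
      using Nneg_ideal_annihilates[OF ad_closure.gen[OF j] c] by simp
    also have "\<dots> = lp_act (f j) (monom m) u - (\<Sum>b\<in>B. sv (c b) (lp_act (f j) b u))"
      unfolding lp_act_def
      by (rule V.lincomb_diff_lincomb) (use B laurent_finite laurent_monom[OF m] in auto)
    finally show ?thesis using lp_act_monom[OF m] by simp
  qed
  then show ?thesis by blast
qed

lemma span_f_words: "v \<in> V.span (f_word ` words)"
proof -
  have "v \<in> lower_span {v0}" using lower_span_v0 by simp
  then show ?thesis
  proof (induction v rule: lower_span.induct)
    case (base u)
    have "f_word [] \<in> f_word ` words" by (intro imageI) simp
    then show ?case using base by (simp add: V.span_base)
  next
    case (f u j m)
    obtain c where c: "\<And>u. act (f j) m u = (\<Sum>b\<in>B. sv (c b) (lp_act (f j) b u))"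
      using act_f_reduce[OF f(2,3)] by blast
    have word: "f_word ((j, b) # w) \<in> f_word ` words" if "w \<in> words" "b \<in> B" for w b
      using that f(2) by (intro imageI) auto
    have act_f_word: "act (f j) m x \<in> V.span (f_word ` words)" if x: "x \<in> f_word ` words" for x
    proof -
      obtain w where w: "w \<in> words" "x = f_word w" using x by blast
      show ?thesis
        unfolding c w(2) by (intro V.span_sum V.span_scale V.span_base) (use word[OF w(1)] in simp)
    qed
    note fj = f_in_derived[OF f(2)] f(3)
    show ?case
      using f.IH
    proof (induction rule: V.span_induct_alt)
      case (step c x y)
      then show ?case
        using act_f_word fj
        by (simp add: act_add act_scale V.span_add V.span_scale)
    qed (simp add: fj V.span_zero)
  qed (simp_all add: V.span_zero V.span_add V.span_scale)
qed

definition words_of_weight :: "('g \<Rightarrow> complex) \<Rightarrow> (nat \<times> ((nat \<Rightarrow> int) \<Rightarrow> complex)) list set" where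
  "words_of_weight \<mu> =
     {w \<in> words. \<forall>x\<in>h1 \<union> h2. hw_weight x - root_lattice_elem (letter_count w) x = \<mu> x}"

lemma finite_words_of_weight: "finite (words_of_weight \<mu>)"
proof (cases "words_of_weight \<mu> = {}")
  case False
  then obtain w0 where w0: "w0 \<in> words_of_weight \<mu>" by blast
  have "words_of_weight \<mu> \<subseteq> {w. set w \<subseteq> {..<l} \<times> B \<and> length w = length w0}"
  proof
    fix w assume w: "w \<in> words_of_weight \<mu>"
    have "root_lattice_elem (letter_count w) x = root_lattice_elem (letter_count w0) x"
      if "x \<in> h1 \<union> h2" for x
    proof -
      have "hw_weight x - root_lattice_elem (letter_count w) x
          = hw_weight x - root_lattice_elem (letter_count w0) x"
        using w w0 that by (simp add: words_of_weight_def)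
      then show ?thesis by simp
    qed
    then have "length w = length w0"
      using w w0 by (intro length_eq_if_same_weight) (auto simp: words_of_weight_def)
    then show "w \<in> {w. set w \<subseteq> {..<l} \<times> B \<and> length w = length w0}"
      using w by (simp add: words_of_weight_def)
  qed
  moreover have "finite {w. set w \<subseteq> {..<l} \<times> B \<and> length w = length w0}"
    using B(1) by (intro finite_lists_length_eq) auto
  ultimately show ?thesis by (rule finite_subset)
qed simp

text \<open>Expand \<open>v\<close> in words and discard the words of other weights: their sum is a sum of
  weight vectors of weights different from \<open>\<mu>\<close>, hence zero.\<close>
lemma wspace_subset_span_words:
  assumes v: "v \<in> wspace \<mu>"
  shows "v \<in> V.span (f_word ` words_of_weight \<mu>)"
proof -
  obtain T r where T: "finite T" "T \<subseteq> f_word ` words" "v = (\<Sum>t\<in>T. sv (r t) t)"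
    using span_f_words[of v] unfolding V.span_explicit by blast
  have "\<forall>t\<in>T. \<exists>w. w \<in> words \<and> t = f_word w" using T(2) by blast
  then obtain word where word: "\<And>t. t \<in> T \<Longrightarrow> word t \<in> words \<and> t = f_word (word t)"
    by (metis bchoice)
  define wt where "wt t = (\<lambda>x. hw_weight x - root_lattice_elem (letter_count (word t)) x)" for t
  have t_wspace: "t \<in> wspace (wt t)" if "t \<in> T" for t
    using f_word_wspace[of "word t"] word[OF that] B(2) unfolding wt_def by auto
  define T\<mu> where "T\<mu> = {t \<in> T. \<forall>x\<in>h1 \<union> h2. wt t x = \<mu> x}"
  have "T\<mu> \<subseteq> T" by (auto simp: T\<mu>_def)
  define s where "s = (\<Sum>t\<in>T\<mu>. sv (r t) t)"
  have "t \<in> wspace \<mu>" if "t \<in> T\<mu>" for t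
    using t_wspace[of t] that weight_space_cong[of "wt t" \<mu>] by (auto simp: T\<mu>_def)
  then have s: "s \<in> wspace \<mu>"
    unfolding s_def by (intro V.subspace_sum[OF subspace_wspace] V.subspace_scale[OF subspace_wspace])
  have "v - s = 0"
  proof (rule wspace_component_eq_0[where S="T - T\<mu>" and g="\<lambda>t. - sv (r t) t" and \<mu>=wt])
    show "v - s \<in> wspace \<mu>" using v s by (rule V.subspace_diff[OF subspace_wspace])
    show "- sv (r t) t \<in> wspace (wt t)" if "t \<in> T - T\<mu>" for t
      using that t_wspace V.subspace_neg[OF subspace_wspace] V.subspace_scale[OF subspace_wspace]
      by blast
    show "v - s + (\<Sum>t\<in>T - T\<mu>. - sv (r t) t) = 0"
      using sum.subset_diff[OF \<open>T\<mu> \<subseteq> T\<close> T(1), of "\<lambda>t. sv (r t) t"] T(3)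
      by (simp add: s_def sum_negf)
  qed (use T(1) in \<open>auto simp: T\<mu>_def\<close>)
  moreover have "t \<in> f_word ` words_of_weight \<mu>" if "t \<in> T\<mu>" for t
    using word[of t] that by (auto simp: T\<mu>_def wt_def words_of_weight_def)
  then have "s \<in> V.span (f_word ` words_of_weight \<mu>)"
    unfolding s_def by (intro V.span_sum V.span_scale V.span_base)
  ultimately show ?thesis by simp
qed

lemma fin_dim_wspace: "fin_dim sv (wspace \<mu>)"
proof -
  have "in_fspan sv (f_word ` words_of_weight \<mu>) v" if "v \<in> wspace \<mu>" for v
    using V.span_finite[OF finite_imageI[OF finite_words_of_weight]] wspace_subset_span_words[OF that]
    by (auto simp: in_fspan_def)
  then show ?thesis
    unfolding fin_dim_def using finite_words_of_weight by blast
qed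

end

theorem lemma3p7:
  fixes sc :: "complex \<Rightarrow> 'g::ab_group_add \<Rightarrow> 'g" and br :: "'g \<Rightarrow> 'g \<Rightarrow> 'g"
    and l :: nat and C :: "nat \<Rightarrow> nat \<Rightarrow> int" and hh :: "'g set"
    and al :: "nat \<Rightarrow> 'g \<Rightarrow> complex" and cr e f :: "nat \<Rightarrow> 'g"
    and h2 :: "'g set" and n :: nat
    and psi1 :: "'g \<Rightarrow> (nat \<Rightarrow> int) \<Rightarrow> complex" and psi2 :: "'g \<Rightarrow> complex"
    and sv :: "complex \<Rightarrow> 'v::ab_group_add \<Rightarrow> 'v"
    and act :: "'g \<Rightarrow> (nat \<Rightarrow> int) \<Rightarrow> 'v \<Rightarrow> 'v" and actd :: "'g \<Rightarrow> 'v \<Rightarrow> 'v"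
    and v0 :: 'v
  assumes KM: "kac_moody sc br l C hh al cr e f"
    and h2_sub: "csubspace sc h2" "h2 \<subseteq> hh"
    and h2_compl: "(hh \<inter> derived sc br) \<inter> h2 = {0}"
                  "\<forall>x\<in>hh. \<exists>a\<in>hh \<inter> derived sc br. \<exists>b\<in>h2. x = a + b"
    and n_pos: "n \<ge> 1"
    and psi_lin: "\<forall>m\<in>expo n. clinear_on sc (hh \<inter> derived sc br) (\<lambda>x. psi1 x m)"
                 "clinear_on sc h2 psi2"
    and irr: "irreducible_module sc br n h2 sv act actd"
    and hw: "v0 \<noteq> 0"
            "\<forall>X\<in>nplus sc br l hh al. \<forall>m\<in>expo n. act X m v0 = 0"
            "\<forall>x\<in>hh \<inter> derived sc br. \<forall>m\<in>expo n. act x m v0 = sv (psi1 x m) v0"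
            "\<forall>x\<in>h2. actd x v0 = sv (psi2 x) v0"
  shows "(\<forall>lam. fin_dim sv (weight_space (hh \<inter> derived sc br) h2 sv act actd lam))
     \<longleftrightarrow> (\<exists>I. cofinite_ideal n I \<and>
            (\<forall>x\<in>hh \<inter> derived sc br. \<forall>a\<in>I. (\<Sum>m\<in>{m. a m \<noteq> 0}. a m * psi1 x m) = 0))"
proof -
  interpret highest_weight_setting sc br l C hh al cr e f n h2 sv act actd psi1 psi2 v0
    using KM h2_sub h2_compl psi_lin irr hw
    by unfold_locales (simp_all add: kac_moody_def irreducible_module_def)
  show ?thesis
  proof
    assume "\<forall>lam. fin_dim sv (weight_space (hh \<inter> derived sc br) h2 sv act actd lam)"
    then have "cofinite_ideal n psi_radical" by (rule cofinite_ideal_psi_radical)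
    with psi_radical_annihilates show "\<exists>I. cofinite_ideal n I \<and>
        (\<forall>x\<in>hh \<inter> derived sc br. \<forall>a\<in>I. (\<Sum>m\<in>{m. a m \<noteq> 0}. a m * psi1 x m) = 0)"
      by (auto simp: psi_lp_def lincomb_def)
  next
    assume "\<exists>I. cofinite_ideal n I \<and>
        (\<forall>x\<in>hh \<inter> derived sc br. \<forall>a\<in>I. (\<Sum>m\<in>{m. a m \<noteq> 0}. a m * psi1 x m) = 0)"
    then obtain I B where "laurent_ideal n I" "\<forall>x\<in>hh \<inter> derived sc br. \<forall>a\<in>I. psi_lp x a = 0"
      "finite B" "B \<subseteq> laurent n" "\<forall>a\<in>laurent n. \<exists>c. (\<lambda>m. a m - (\<Sum>b\<in>B. c b * b m)) \<in> I"
      by (auto simp: cofinite_ideal_def psi_lp_def lincomb_def)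
    then interpret highest_weight_cofinite sc br l C hh al cr e f n h2 sv act actd psi1 psi2 v0 I B
      by unfold_locales
    show "\<forall>lam. fin_dim sv (weight_space (hh \<inter> derived sc br) h2 sv act actd lam)"
      using fin_dim_wspace by blast
  qed
qed

end
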